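(* Let $K$ be an algebraically closed field, $Q$ a quiver, $\mathcal X$ a $K$-linear representation of $Q$ such that $\mathrm{Ext}^1_{KQ}(G(\mathcal X),KQ)=0$, and $P$ a closed subquiver of $Q$. Then $\mathrm{Ext}^1_{KP}(G(\mathcal X\restriction P),KP)=0$.
   Context: A quiver $Q=(Q_0,Q_1)$ is a directed graph with vertices $Q_0$ and arrows $Q_1$ (arrow $a$ has source $s(a)$, target $t(a)$). Paths are composable sequences of arrows written left to right, with trivial paths $e_v$; the path algebra $KQ$ has $K$-basis all paths, with product = concatenation when the target of the first equals the source of the second, else $0$. Modules are right modules. A $K$-linear representation $\mathcal X$ of $Q$ consists of $K$-vector spaces $\mathcal X_v$ ($v\in Q_0$) and $K$-linear maps $\mathcal X_a:\mathcal X_{s(a)}\to\mathcal X_{t(a)}$ ($a\in Q_1$). $G(\mathcal X)$ is the $KQ$-module with underlying space $\bigoplus_{v\in Q_0}\mathcal X_v$, with $m e_w$ the $\mathcal X_w$-component of $m$ and $m a:=\mathcal X_a(m e_{s(a)})$, extended by distributivity. A subquiver $P=(P_0,P_1)$ has $P_0\subseteq Q_0$, $P_1\subseteq Q_1$ with sources and targets of arrows of $P_1$ in $P_0$; $\mathcal X\restriction P$ is the representation of $P$ with the same spaces and maps on $P_0,P_1$. For $S\subseteq Q_0$, the closure $\overline{S}^Q$ is the subquiver whose vertices are those reachable by a path in $Q$ from a vertex of $S$ (including $S$ itself) and whose arrows are all arrows of $Q$ with source among these vertices. A closed subquiver is one of the form $\overline{S}^Q$ for some $S\subseteq Q_0$.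 *)

theory Defs
  imports Main "HOL-Computational_Algebra.Polynomial"
begin

definition alg_closed_field :: "'k::field itself \<Rightarrow> bool" where
  "alg_closed_field _ \<longleftrightarrow> (\<forall>p::'k poly. degree p > 0 \<longrightarrow> (\<exists>z. poly p z = 0))"

text \<open>A quiver is given by a vertex set Q0, an arrow set Q1 and source/target maps s, t.
  A path is a pair (v, as): start vertex v and a list of arrows (left to right);
  (v, []) is the trivial path e_v.\<close>

definition quiver :: "'v set \<Rightarrow> 'a set \<Rightarrow> ('a \<Rightarrow> 'v) \<Rightarrow> ('a \<Rightarrow> 'v) \<Rightarrow> bool" where
  "quiver Q0 Q1 s t \<longleftrightarrow> (\<forall>a\<in>Q1. s a \<in> Q0 \<and> t a \<in> Q0)"

definition is_path :: "'v set \<Rightarrow> 'a set \<Rightarrow> ('a \<Rightarrow> 'v) \<Rightarrow> ('a \<Rightarrow> 'v) \<Rightarrow> 'v \<times> 'a list \<Rightarrow> bool" where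
  "is_path Q0 Q1 s t p \<longleftrightarrow>
     fst p \<in> Q0 \<and> set (snd p) \<subseteq> Q1 \<and>
     (snd p \<noteq> [] \<longrightarrow> s (hd (snd p)) = fst p) \<and>
     (\<forall>i. Suc i < length (snd p) \<longrightarrow> t (snd p ! i) = s (snd p ! Suc i))"

definition path_tgt :: "('a \<Rightarrow> 'v) \<Rightarrow> 'v \<times> 'a list \<Rightarrow> 'v" where
  "path_tgt t p = (if snd p = [] then fst p else t (last (snd p)))"

definition path_concat :: "('a \<Rightarrow> 'v) \<Rightarrow> 'v \<times> 'a list \<Rightarrow> 'v \<times> 'a list \<Rightarrow> ('v \<times> 'a list) option" where
  "path_concat t p q = (if path_tgt t p = fst q then Some (fst p, snd p @ snd q) else None)"

definition closure_verts :: "'v set \<Rightarrow> 'a set \<Rightarrow> ('a \<Rightarrow> 'v) \<Rightarrow> ('a \<Rightarrow> 'v) \<Rightarrow> 'v set \<Rightarrow> 'v set" where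
  "closure_verts Q0 Q1 s t S =
     {w. \<exists>v\<in>S. \<exists>as. is_path Q0 Q1 s t (v, as) \<and> path_tgt t (v, as) = w}"

definition closure_arrows :: "'v set \<Rightarrow> 'a set \<Rightarrow> ('a \<Rightarrow> 'v) \<Rightarrow> ('a \<Rightarrow> 'v) \<Rightarrow> 'v set \<Rightarrow> 'a set" where
  "closure_arrows Q0 Q1 s t S = {a\<in>Q1. s a \<in> closure_verts Q0 Q1 s t S}"

definition closed_subquiver ::
  "'v set \<Rightarrow> 'a set \<Rightarrow> ('a \<Rightarrow> 'v) \<Rightarrow> ('a \<Rightarrow> 'v) \<Rightarrow> 'v set \<Rightarrow> 'a set \<Rightarrow> bool" where
  "closed_subquiver Q0 Q1 s t P0 P1 \<longleftrightarrow>
     (\<exists>S\<subseteq>Q0. P0 = closure_verts Q0 Q1 s t S \<and> P1 = closure_arrows Q0 Q1 s t S)"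

record 'r rng =
  rcarrier :: "'r set"
  radd :: "'r \<Rightarrow> 'r \<Rightarrow> 'r"
  rmult :: "'r \<Rightarrow> 'r \<Rightarrow> 'r"

record ('m, 'r) rmod =
  mcarrier :: "'m set"
  mzero :: 'm
  madd :: "'m \<Rightarrow> 'm \<Rightarrow> 'm"
  mact :: "'m \<Rightarrow> 'r \<Rightarrow> 'm"

definition rmodule :: "'r rng \<Rightarrow> ('m, 'r) rmod \<Rightarrow> bool" where
  "rmodule R M \<longleftrightarrow>
     mzero M \<in> mcarrier M \<and>
     (\<forall>x\<in>mcarrier M. \<forall>y\<in>mcarrier M. madd M x y \<in> mcarrier M) \<and>
     (\<forall>x\<in>mcarrier M. \<forall>y\<in>mcarrier M. \<forall>z\<in>mcarrier M.
        madd M (madd M x y) z = madd M x (madd M y z)) \<and>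
     (\<forall>x\<in>mcarrier M. \<forall>y\<in>mcarrier M. madd M x y = madd M y x) \<and>
     (\<forall>x\<in>mcarrier M. madd M (mzero M) x = x) \<and>
     (\<forall>x\<in>mcarrier M. \<exists>y\<in>mcarrier M. madd M x y = mzero M) \<and>
     (\<forall>x\<in>mcarrier M. \<forall>r\<in>rcarrier R. mact M x r \<in> mcarrier M) \<and>
     (\<forall>x\<in>mcarrier M. \<forall>y\<in>mcarrier M. \<forall>r\<in>rcarrier R.
        mact M (madd M x y) r = madd M (mact M x r) (mact M y r)) \<and>
     (\<forall>x\<in>mcarrier M. \<forall>r\<in>rcarrier R. \<forall>r'\<in>rcarrier R.
        mact M x (radd R r r') = madd M (mact M x r) (mact M x r')) \<and>
     (\<forall>x\<in>mcarrier M. \<forall>r\<in>rcarrier R. \<forall>r'\<in>rcarrier R.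
        mact M (mact M x r) r' = mact M x (rmult R r r'))"

definition mod_hom :: "'r rng \<Rightarrow> ('m, 'r) rmod \<Rightarrow> ('n, 'r) rmod \<Rightarrow> ('m \<Rightarrow> 'n) \<Rightarrow> bool" where
  "mod_hom R M N f \<longleftrightarrow>
     (\<forall>x\<in>mcarrier M. f x \<in> mcarrier N) \<and>
     (\<forall>x\<in>mcarrier M. \<forall>y\<in>mcarrier M. f (madd M x y) = madd N (f x) (f y)) \<and>
     (\<forall>x\<in>mcarrier M. \<forall>r\<in>rcarrier R. f (mact M x r) = mact N (f x) r)"

text \<open>Ext^1_R(M,N) = 0, in the Yoneda sense: every short exact sequence
  0 \<rightarrow> N \<rightarrow> E \<rightarrow> M \<rightarrow> 0 of right R-modules splits (equivalently, the inclusion of N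
  has a retraction). The middle term E ranges over modules whose carrier lies in
  the type 'n \<times> 'm, which (up to isomorphism) covers every extension, since the
  underlying set of an extension is in bijection with N \<times> M.\<close>
definition Ext1_vanishes :: "'r rng \<Rightarrow> ('m, 'r) rmod \<Rightarrow> ('n, 'r) rmod \<Rightarrow> bool" where
  "Ext1_vanishes R M N \<longleftrightarrow>
     (\<forall>(E :: ('n \<times> 'm, 'r) rmod) i p.
        rmodule R E \<and> mod_hom R N E i \<and> mod_hom R E M p \<and>
        inj_on i (mcarrier N) \<and> p ` mcarrier E = mcarrier M \<and>
        {x\<in>mcarrier E. p x = mzero M} = i ` mcarrier N
        \<longrightarrow> (\<exists>q. mod_hom R E N q \<and> (\<forall>x\<in>mcarrier N. q (i x) = x)))"

definition path_alg_carrier ::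
  "'v set \<Rightarrow> 'a set \<Rightarrow> ('a \<Rightarrow> 'v) \<Rightarrow> ('a \<Rightarrow> 'v) \<Rightarrow> ('v \<times> 'a list \<Rightarrow> 'k::field) set" where
  "path_alg_carrier Q0 Q1 s t =
     {f. finite {p. f p \<noteq> 0} \<and> (\<forall>p. f p \<noteq> 0 \<longrightarrow> is_path Q0 Q1 s t p)}"

definition path_alg_mult ::
  "('a \<Rightarrow> 'v) \<Rightarrow> ('v \<times> 'a list \<Rightarrow> 'k::field) \<Rightarrow> ('v \<times> 'a list \<Rightarrow> 'k) \<Rightarrow> ('v \<times> 'a list \<Rightarrow> 'k)" where
  "path_alg_mult t f g = (\<lambda>p. \<Sum>p1\<in>{q. f q \<noteq> 0}. \<Sum>p2\<in>{q. g q \<noteq> 0}.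
       (if path_concat t p1 p2 = Some p then f p1 * g p2 else 0))"

definition path_ring ::
  "'v set \<Rightarrow> 'a set \<Rightarrow> ('a \<Rightarrow> 'v) \<Rightarrow> ('a \<Rightarrow> 'v) \<Rightarrow> ('v \<times> 'a list \<Rightarrow> 'k::field) rng" where
  "path_ring Q0 Q1 s t =
     \<lparr> rcarrier = path_alg_carrier Q0 Q1 s t,
       radd = (\<lambda>f g p. f p + g p),
       rmult = path_alg_mult t \<rparr>"

definition regular_module ::
  "'v set \<Rightarrow> 'a set \<Rightarrow> ('a \<Rightarrow> 'v) \<Rightarrow> ('a \<Rightarrow> 'v)
     \<Rightarrow> ('v \<times> 'a list \<Rightarrow> 'k::field, 'v \<times> 'a list \<Rightarrow> 'k) rmod" where
  "regular_module Q0 Q1 s t =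
     \<lparr> mcarrier = path_alg_carrier Q0 Q1 s t,
       mzero = (\<lambda>p. 0),
       madd = (\<lambda>f g p. f p + g p),
       mact = path_alg_mult t \<rparr>"

text \<open>A K-linear representation: the spaces X_v are K-subspaces V v of an ambient
  K-vector space 'x (with scalar multiplication scale), and X_a is a map that is
  K-linear from V (s a) to V (t a).\<close>
definition representation ::
  "'v set \<Rightarrow> 'a set \<Rightarrow> ('a \<Rightarrow> 'v) \<Rightarrow> ('a \<Rightarrow> 'v) \<Rightarrow> ('k::field \<Rightarrow> 'x::ab_group_add \<Rightarrow> 'x)
     \<Rightarrow> ('v \<Rightarrow> 'x set) \<Rightarrow> ('a \<Rightarrow> 'x \<Rightarrow> 'x) \<Rightarrow> bool" where
  "representation Q0 Q1 s t scale V X \<longleftrightarrow>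
     vector_space scale \<and>
     (\<forall>v\<in>Q0. module.subspace scale (V v)) \<and>
     (\<forall>a\<in>Q1. (\<forall>x\<in>V (s a). X a x \<in> V (t a)) \<and>
        (\<forall>x\<in>V (s a). \<forall>y\<in>V (s a). X a (x + y) = X a x + X a y) \<and>
        (\<forall>c. \<forall>x\<in>V (s a). X a (scale c x) = scale c (X a x)))"

definition eval_path :: "('a \<Rightarrow> 'x \<Rightarrow> 'x) \<Rightarrow> 'v \<times> 'a list \<Rightarrow> 'x \<Rightarrow> 'x" where
  "eval_path X p x = foldl (\<lambda>y a. X a y) x (snd p)"

text \<open>G(X): underlying space the direct sum of the X_v (v in Q0), i.e. finitely
  supported vertex-indexed families; m \<cdot> p is supported at the target of p with value
  X_p(m e_{source p}); extended K-linearly to KQ.\<close>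
definition G_module ::
  "'v set \<Rightarrow> 'a set \<Rightarrow> ('a \<Rightarrow> 'v) \<Rightarrow> ('a \<Rightarrow> 'v) \<Rightarrow> ('k::field \<Rightarrow> 'x::ab_group_add \<Rightarrow> 'x)
     \<Rightarrow> ('v \<Rightarrow> 'x set) \<Rightarrow> ('a \<Rightarrow> 'x \<Rightarrow> 'x) \<Rightarrow> ('v \<Rightarrow> 'x, 'v \<times> 'a list \<Rightarrow> 'k) rmod" where
  "G_module Q0 Q1 s t scale V X =
     \<lparr> mcarrier = {m. (\<forall>v\<in>Q0. m v \<in> V v) \<and> (\<forall>v. v \<notin> Q0 \<longrightarrow> m v = 0) \<and> finite {v. m v \<noteq> 0}},
       mzero = (\<lambda>v. 0),
       madd = (\<lambda>m m' v. m v + m' v),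
       mact = (\<lambda>m f w. \<Sum>p\<in>{q. f q \<noteq> 0}.
                 (if path_tgt t p = w then scale (f p) (eval_path X p (m (fst p))) else 0)) \<rparr>"

end

theory Submission
  imports Defs "HOL-Algebra.FiniteProduct" "HOL-Library.Product_Plus" "HOL-Library.Function_Algebras"
begin

text \<open>Over the path algebra, \<open>Ext\<^sup>1(G(X), KQ)\<close> is computed by the standard two-term resolution of
  \<open>G(X)\<close>: it vanishes iff every arrow cochain, a family of \<open>K\<close>-linear maps \<open>g\<^sub>a : X\<^bsub>s a\<^esub> \<rightarrow> KQ e\<^bsub>t a\<^esub>\<close>,
  is a coboundary \<open>g\<^sub>a x = f\<^bsub>s a\<^esub>(x) a - f\<^bsub>t a\<^esub>(X\<^sub>a x)\<close> of \<open>K\<close>-linear maps \<open>f\<^sub>v : X\<^sub>v \<rightarrow> KQ e\<^sub>v\<close>.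
  If \<open>Ext\<^sup>1\<close> vanishes, the extension of \<open>G(X)\<close> by \<open>KQ\<close> built from \<open>g\<close> splits, and the splitting
  yields \<open>f\<close>. Conversely, a \<open>K\<close>-linear section of a given extension fails to commute with the arrows by
  a cochain; correcting the section by a vertex cochain bounding it gives a module section.

  The coboundary condition passes to a closed subquiver \<open>P\<close>: extend a cochain on \<open>P\<close> by zero, bound
  it on \<open>Q\<close>, and restrict \<open>f\<close> to paths starting in \<open>P\<close>; these stay inside \<open>P\<close> because \<open>P\<close> is
  closed under arrows.\<close>

declare split_paired_All[simp del] split_paired_Ex[simp del]

lemma path_tgt_Nil [simp]: "path_tgt t (v, []) = v"
  unfolding path_tgt_def by simp

lemma path_tgt_Cons: "path_tgt t (v, a # as) = path_tgt t (t a, as)"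
  unfolding path_tgt_def by simp

lemma path_tgt_append: "path_tgt t p = fst q \<Longrightarrow> path_tgt t (fst p, snd p @ snd q) = path_tgt t q"
  unfolding path_tgt_def by auto

lemma path_tgt_append_eq: "path_tgt t (v, as @ bs) = path_tgt t (path_tgt t (v, as), bs)"
  unfolding path_tgt_def by simp

lemma path_concat_eq_Some:
  "path_concat t p q = Some r \<longleftrightarrow> path_tgt t p = fst q \<and> r = (fst p, snd p @ snd q)"
  unfolding path_concat_def by auto

lemma path_concat_assoc:
  "(path_tgt t p1 = fst p2 \<and> path_concat t (fst p1, snd p1 @ snd p2) p3 = Some q) \<longleftrightarrow>
   (path_tgt t p2 = fst p3 \<and> path_concat t p1 (fst p2, snd p2 @ snd p3) = Some q)"
  unfolding path_concat_eq_Some using path_tgt_append[of t p1 p2] by auto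

lemma eval_path_Nil [simp]: "eval_path X (v, []) x = x"
  unfolding eval_path_def by simp

lemma eval_path_Cons: "eval_path X (v, a # as) x = eval_path X (w, as) (X a x)"
  unfolding eval_path_def by simp

lemma eval_path_append: "eval_path X (v, snd p @ snd q) x = eval_path X q (eval_path X p x)"
  unfolding eval_path_def by simp

lemma is_path_Nil: "is_path Q0 Q1 s t (v, []) \<longleftrightarrow> v \<in> Q0"
  unfolding is_path_def by simp

lemma is_path_fst: "is_path Q0 Q1 s t p \<Longrightarrow> fst p \<in> Q0"
  unfolding is_path_def by simp

lemma is_path_mono: "P0 \<subseteq> Q0 \<Longrightarrow> P1 \<subseteq> Q1 \<Longrightarrow> is_path P0 P1 s t p \<Longrightarrow> is_path Q0 Q1 s t p"
  unfolding is_path_def by auto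

lemma is_path_Cons:
  assumes "quiver Q0 Q1 s t"
  shows "is_path Q0 Q1 s t (v, a # as) \<longleftrightarrow> a \<in> Q1 \<and> s a = v \<and> is_path Q0 Q1 s t (t a, as)"
proof
  assume "is_path Q0 Q1 s t (v, a # as)"
  then have a: "v \<in> Q0" "a \<in> Q1" "s a = v" "set as \<subseteq> Q1"
    and chain: "\<And>i. Suc i < length (a # as) \<Longrightarrow> t ((a # as) ! i) = s ((a # as) ! Suc i)"
    unfolding is_path_def by auto
  have "as \<noteq> [] \<Longrightarrow> s (hd as) = t a" using chain[of 0] by (cases as) auto
  moreover have "\<And>i. Suc i < length as \<Longrightarrow> t (as ! i) = s (as ! Suc i)"
    using chain by (metis Suc_less_eq length_Cons nth_Cons_Suc)
  moreover have "t a \<in> Q0" using assms a unfolding quiver_def by auto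
  ultimately show "a \<in> Q1 \<and> s a = v \<and> is_path Q0 Q1 s t (t a, as)"
    using a unfolding is_path_def by auto
next
  assume "a \<in> Q1 \<and> s a = v \<and> is_path Q0 Q1 s t (t a, as)"
  then have a: "a \<in> Q1" "s a = v" "set as \<subseteq> Q1"
    and hd: "as \<noteq> [] \<Longrightarrow> s (hd as) = t a"
    and chain: "\<And>i. Suc i < length as \<Longrightarrow> t (as ! i) = s (as ! Suc i)"
    unfolding is_path_def by auto
  have "t ((a # as) ! i) = s ((a # as) ! Suc i)" if "Suc i < length (a # as)" for i
    using that hd chain by (cases i; cases as) auto
  moreover have "v \<in> Q0" using assms a unfolding quiver_def by auto
  ultimately show "is_path Q0 Q1 s t (v, a # as)" using a unfolding is_path_def by auto
qed

lemma is_path_arrow: "quiver Q0 Q1 s t \<Longrightarrow> a \<in> Q1 \<Longrightarrow> is_path Q0 Q1 s t (s a, [a])"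
  by (simp add: is_path_Cons is_path_Nil quiver_def)

lemma path_tgt_in_verts:
  assumes "quiver Q0 Q1 s t" "is_path Q0 Q1 s t p"
  shows "path_tgt t p \<in> Q0"
proof -
  have "path_tgt t (v, as) \<in> Q0" if "is_path Q0 Q1 s t (v, as)" for v as
    using that by (induction as arbitrary: v) (simp_all add: is_path_Nil is_path_Cons[OF assms(1)] path_tgt_Cons)
  then show ?thesis using assms(2) by (metis prod.collapse)
qed

lemma is_path_append:
  assumes "quiver Q0 Q1 s t" "is_path Q0 Q1 s t p" "is_path Q0 Q1 s t q" "path_tgt t p = fst q"
  shows "is_path Q0 Q1 s t (fst p, snd p @ snd q)"
proof -
  have "is_path Q0 Q1 s t (v, as @ snd q)" if "is_path Q0 Q1 s t (v, as)" "path_tgt t (v, as) = fst q" for v as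
    using that by (induction as arbitrary: v)
      (simp_all add: assms(3) is_path_Cons[OF assms(1)] path_tgt_Cons)
  then show ?thesis using assms(2,4) by (metis prod.collapse)
qed

section \<open>The path algebra\<close>

definition path_monom :: "'k::zero \<Rightarrow> 'v \<times> 'a list \<Rightarrow> 'v \<times> 'a list \<Rightarrow> 'k" where
  "path_monom c p = (\<lambda>q. if q = p then c else 0)"

lemma path_monom_zero [simp]: "path_monom 0 p = (\<lambda>_. 0)"
  unfolding path_monom_def by auto

lemma path_monom_add: "path_monom (c + d :: 'k::monoid_add) p = (\<lambda>q. path_monom c p q + path_monom d p q)"
  by (simp add: path_monom_def fun_eq_iff)

lemma supp_path_monom: "{q. path_monom c p q \<noteq> 0} = (if c = 0 then {} else {p})"
  unfolding path_monom_def by auto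

lemma path_alg_mult_eq_sum_superset:
  assumes "finite A" "finite B" "{q. f q \<noteq> 0} \<subseteq> A" "{q. g q \<noteq> 0} \<subseteq> B"
  shows "path_alg_mult t f g r =
    (\<Sum>p\<in>A. \<Sum>q\<in>B. if path_concat t p q = Some r then f p * g q else 0)"
proof -
  have "path_alg_mult t f g r =
    (\<Sum>p\<in>{q. f q \<noteq> 0}. \<Sum>q\<in>B. if path_concat t p q = Some r then f p * g q else 0)"
    unfolding path_alg_mult_def
    by (rule sum.cong[OF refl], rule sum.mono_neutral_left) (use assms in \<open>auto intro: finite_subset\<close>)
  also have "\<dots> = (\<Sum>p\<in>A. \<Sum>q\<in>B. if path_concat t p q = Some r then f p * g q else 0)"
    by (rule sum.mono_neutral_left) (use assms in \<open>auto intro!: sum.neutral split: if_splits\<close>)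
  finally show ?thesis .
qed

lemma path_alg_mult_zero_left [simp]: "path_alg_mult t (\<lambda>_. 0) g = (\<lambda>_. 0)"
  unfolding path_alg_mult_def by simp

lemma path_alg_mult_monom_monom:
  "path_alg_mult t (path_monom c p) (path_monom d q) =
    (if path_tgt t p = fst q then path_monom (c * d) (fst p, snd p @ snd q) else (\<lambda>_. 0))"
proof
  fix r
  have "path_alg_mult t (path_monom c p) (path_monom d q) r =
    (\<Sum>p'\<in>{p}. \<Sum>q'\<in>{q}. if path_concat t p' q' = Some r then path_monom c p p' * path_monom d q q' else 0)"
    by (rule path_alg_mult_eq_sum_superset) (auto simp: path_monom_def)
  then show "path_alg_mult t (path_monom c p) (path_monom d q) r =
    (if path_tgt t p = fst q then path_monom (c * d) (fst p, snd p @ snd q) else (\<lambda>_. 0)) r"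
    by (auto simp: path_monom_def path_concat_eq_Some)
qed

lemma path_alg_mult_monom_trivial:
  assumes "finite {q. f q \<noteq> 0}"
  shows "path_alg_mult t f (path_monom c (v, [])) = (\<lambda>q. if path_tgt t q = v then f q * c else 0)"
proof
  fix q
  have "path_alg_mult t f (path_monom c (v, [])) q =
    (\<Sum>p\<in>{q. f q \<noteq> 0}. \<Sum>p'\<in>{(v, [])}. if path_concat t p p' = Some q then f p * path_monom c (v, []) p' else 0)"
    by (rule path_alg_mult_eq_sum_superset) (use assms in \<open>auto simp: path_monom_def\<close>)
  also have "\<dots> = (\<Sum>p\<in>{q. f q \<noteq> 0}. if p = q then (if path_tgt t q = v then f p * c else 0) else 0)"
    by (rule sum.cong[OF refl]) (auto simp: path_concat_eq_Some path_monom_def)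
  also have "\<dots> = (if path_tgt t q = v then f q * c else 0)"
    using assms by (simp add: sum.delta')
  finally show "path_alg_mult t f (path_monom c (v, [])) q = (if path_tgt t q = v then f q * c else 0)" .
qed

lemma path_alg_mult_add_left:
  assumes "finite {q. f q \<noteq> 0}" "finite {q. g q \<noteq> 0}" "finite {q. h q \<noteq> 0}"
  shows "path_alg_mult t (\<lambda>q. f q + g q) h = (\<lambda>q. path_alg_mult t f h q + path_alg_mult t g h q)"
proof
  fix r
  let ?A = "{q. f q \<noteq> 0} \<union> {q. g q \<noteq> 0}" and ?C = "{q. h q \<noteq> 0}"
  have "finite ?A" using assms by simp
  note expand = path_alg_mult_eq_sum_superset[OF this assms(3) _ order_refl]
  show "path_alg_mult t (\<lambda>q. f q + g q) h r = path_alg_mult t f h r + path_alg_mult t g h r"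
    by (subst (1 2 3) expand) (auto simp: sum.distrib[symmetric] distrib_right intro!: sum.cong)
qed

lemma path_alg_mult_scale_left:
  assumes "finite {q. f q \<noteq> 0}" "finite {q. h q \<noteq> 0}"
  shows "path_alg_mult t (\<lambda>q. c * f q) h = (\<lambda>q. c * path_alg_mult t f h q)"
proof
  fix r
  note expand = path_alg_mult_eq_sum_superset[OF assms _ order_refl]
  show "path_alg_mult t (\<lambda>q. c * f q) h r = c * path_alg_mult t f h r"
    by (subst (1 2) expand) (auto simp: sum_distrib_left intro!: sum.cong)
qed

lemma path_alg_mult_nonzero_imp_concat:
  assumes "path_alg_mult t f g r \<noteq> 0"
  obtains p q where "f p \<noteq> 0" "g q \<noteq> 0" "path_concat t p q = Some r"
proof -
  have "\<exists>p q. f p \<noteq> 0 \<and> g q \<noteq> 0 \<and> path_concat t p q = Some r"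
  proof (rule ccontr)
    assume "\<not> ?thesis"
    then have "path_alg_mult t f g r = 0" unfolding path_alg_mult_def by (intro sum.neutral ballI) auto
    with assms show False by simp
  qed
  then show ?thesis using that by blast
qed

lemma supp_path_alg_mult_subset:
  "{r. path_alg_mult t f g r \<noteq> 0} \<subseteq> (\<lambda>(p, q). (fst p, snd p @ snd q)) ` ({q. f q \<noteq> 0} \<times> {q. g q \<noteq> 0})"
proof
  fix r assume "r \<in> {r. path_alg_mult t f g r \<noteq> 0}"
  then obtain p q where "f p \<noteq> 0" "g q \<noteq> 0" "path_concat t p q = Some r"
    by (auto elim: path_alg_mult_nonzero_imp_concat)
  then show "r \<in> (\<lambda>(p, q). (fst p, snd p @ snd q)) ` ({q. f q \<noteq> 0} \<times> {q. g q \<noteq> 0})"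
    by (intro image_eqI[where x="(p, q)"]) (auto simp: path_concat_eq_Some)
qed

lemma finite_supp_path_alg_mult:
  "finite {q. f q \<noteq> 0} \<Longrightarrow> finite {q. g q \<noteq> 0} \<Longrightarrow> finite {r. path_alg_mult t f g r \<noteq> 0}"
  using supp_path_alg_mult_subset by (rule finite_subset) simp

lemma path_tgt_path_alg_mult:
  assumes "path_alg_mult t f g r \<noteq> 0" "\<And>q. g q \<noteq> 0 \<Longrightarrow> path_tgt t q = w"
  shows "path_tgt t r = w"
proof -
  obtain p q where "g q \<noteq> 0" "path_concat t p q = Some r"
    using assms(1) by (rule path_alg_mult_nonzero_imp_concat)
  then show ?thesis using assms(2) path_tgt_append[of t p q] by (auto simp: path_concat_eq_Some)
qed

lemma path_alg_mult_in_carrier: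
  assumes "quiver Q0 Q1 s t" "f \<in> path_alg_carrier Q0 Q1 s t" "g \<in> path_alg_carrier Q0 Q1 s t"
  shows "path_alg_mult t f g \<in> path_alg_carrier Q0 Q1 s t"
proof -
  have "is_path Q0 Q1 s t r" if nz: "path_alg_mult t f g r \<noteq> 0" for r
  proof -
    obtain p q where "f p \<noteq> 0" "g q \<noteq> 0" "path_concat t p q = Some r"
      using nz by (rule path_alg_mult_nonzero_imp_concat)
    with assms show ?thesis
      unfolding path_alg_carrier_def by (auto simp: path_concat_eq_Some intro: is_path_append)
  qed
  with assms(2,3) show ?thesis
    unfolding path_alg_carrier_def by (auto intro: finite_supp_path_alg_mult)
qed

definition restrict_tgt :: "('a \<Rightarrow> 'v) \<Rightarrow> 'v \<Rightarrow> ('v \<times> 'a list \<Rightarrow> 'k::zero) \<Rightarrow> 'v \<times> 'a list \<Rightarrow> 'k" where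
  "restrict_tgt t v n = (\<lambda>q. if path_tgt t q = v then n q else 0)"

lemma path_alg_mult_restrict_tgt_monom:
  assumes "finite {q. n q \<noteq> 0}"
  shows "path_alg_mult t (restrict_tgt t (fst p) n) (path_monom 1 p) q =
    (\<Sum>p'\<in>{q. n q \<noteq> 0}. if path_concat t p' p = Some q then n p' else 0)"
proof -
  have "path_alg_mult t (restrict_tgt t (fst p) n) (path_monom 1 p) q = (\<Sum>p'\<in>{q. n q \<noteq> 0}. \<Sum>p''\<in>{p}.
      if path_concat t p' p'' = Some q then restrict_tgt t (fst p) n p' * path_monom 1 p p'' else 0)"
    by (rule path_alg_mult_eq_sum_superset) (use assms in \<open>auto simp: restrict_tgt_def path_monom_def\<close>)
  then show ?thesis by (auto simp: path_monom_def restrict_tgt_def path_concat_eq_Some intro!: sum.cong)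
qed

lemma restrict_tgt_path_alg_mult:
  assumes "finite {q. n q \<noteq> 0}"
  shows "restrict_tgt t w (path_alg_mult t n r) q = (\<Sum>p\<in>{q. r q \<noteq> 0}.
    if path_tgt t p = w then r p * path_alg_mult t (restrict_tgt t (fst p) n) (path_monom 1 p) q else 0)"
proof -
  have "restrict_tgt t w (path_alg_mult t n r) q = (\<Sum>p\<in>{q. r q \<noteq> 0}. \<Sum>p'\<in>{q. n q \<noteq> 0}.
      if path_tgt t q = w \<and> path_concat t p' p = Some q then n p' * r p else 0)"
    unfolding restrict_tgt_def path_alg_mult_def by (subst sum.swap) (auto intro!: sum.neutral)
  also have "\<dots> = (\<Sum>p\<in>{q. r q \<noteq> 0}.
      if path_tgt t p = w then r p * path_alg_mult t (restrict_tgt t (fst p) n) (path_monom 1 p) q else 0)"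
    unfolding path_alg_mult_restrict_tgt_monom[OF assms] sum_distrib_left
    by (intro sum.cong refl)
      (auto simp: path_concat_eq_Some path_tgt_append_eq intro!: sum.cong sum.neutral)
  finally show ?thesis .
qed

lemma sum_path_concat_eq_Some:
  assumes "finite R" "path_tgt t p = fst q \<Longrightarrow> (fst p, snd p @ snd q) \<in> R"
  shows "(\<Sum>r\<in>R. if path_concat t p q = Some r then F r else 0) =
    (if path_tgt t p = fst q then F (fst p, snd p @ snd q) else 0)"
  using assms by (simp add: path_concat_eq_Some sum.delta' cong: conj_cong)

lemma if_then_sum_else_zero: "(if P then sum F S else 0) = (\<Sum>x\<in>S. if P then F x else 0)"
  by (cases P) simp_all

text \<open>Both bracketings of a triple product are sums over triples of paths; the two index conditions
  agree by associativity of concatenation.\<close>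

lemma path_alg_mult_assoc_sum_left:
  fixes f g h :: "'v \<times> 'a list \<Rightarrow> 'k::field"
  assumes "finite A" "finite B" "finite C"
    "{q. f q \<noteq> 0} \<subseteq> A" "{q. g q \<noteq> 0} \<subseteq> B" "{q. h q \<noteq> 0} \<subseteq> C"
  shows "path_alg_mult t (path_alg_mult t f g) h q = (\<Sum>p1\<in>A. \<Sum>p2\<in>B. \<Sum>p3\<in>C.
    if path_tgt t p1 = fst p2 \<and> path_concat t (fst p1, snd p1 @ snd p2) p3 = Some q
    then f p1 * g p2 * h p3 else 0)"
proof -
  define AB where "AB = (\<lambda>(p, q). (fst p, snd p @ snd q)) ` (A \<times> B)"
  have "finite AB" using assms(1,2) by (simp add: AB_def)
  moreover have "{q. path_alg_mult t f g q \<noteq> 0} \<subseteq> AB"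
    unfolding AB_def
    by (rule subset_trans[OF supp_path_alg_mult_subset image_mono[OF Sigma_mono]]) (use assms in auto)
  ultimately have AB: "finite AB" "{q. path_alg_mult t f g q \<noteq> 0} \<subseteq> AB" by blast+
  have "path_alg_mult t (path_alg_mult t f g) h q = (\<Sum>r\<in>AB. \<Sum>p3\<in>C. \<Sum>p1\<in>A. \<Sum>p2\<in>B.
      if path_concat t p1 p2 = Some r then if path_concat t r p3 = Some q then f p1 * g p2 * h p3 else 0 else 0)"
    using assms AB
    by (simp add: path_alg_mult_eq_sum_superset[of AB C] path_alg_mult_eq_sum_superset[of A B]
        sum_distrib_right if_then_sum_else_zero cong: if_cong)
      (auto intro!: sum.cong)
  also have "\<dots> = (\<Sum>p1\<in>A. \<Sum>p2\<in>B. \<Sum>p3\<in>C. \<Sum>r\<in>AB.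
      if path_concat t p1 p2 = Some r then if path_concat t r p3 = Some q then f p1 * g p2 * h p3 else 0 else 0)"
    by (subst sum.swap, subst (2) sum.swap, simp only: sum.swap[where A = AB])
  also have "\<dots> = (\<Sum>p1\<in>A. \<Sum>p2\<in>B. \<Sum>p3\<in>C.
      if path_tgt t p1 = fst p2 \<and> path_concat t (fst p1, snd p1 @ snd p2) p3 = Some q
    then f p1 * g p2 * h p3 else 0)"
  proof -
    have "(fst p1, snd p1 @ snd p2) \<in> AB" if "p1 \<in> A" "p2 \<in> B" for p1 p2
      using that by (force simp: AB_def)
    then show ?thesis
      by (intro sum.cong refl, subst sum_path_concat_eq_Some) (use AB(1) in auto)
  qed
  finally show ?thesis .
qed

lemma path_alg_mult_assoc_sum_right:
  fixes f g h :: "'v \<times> 'a list \<Rightarrow> 'k::field"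
  assumes "finite A" "finite B" "finite C"
    "{q. f q \<noteq> 0} \<subseteq> A" "{q. g q \<noteq> 0} \<subseteq> B" "{q. h q \<noteq> 0} \<subseteq> C"
  shows "path_alg_mult t f (path_alg_mult t g h) q = (\<Sum>p1\<in>A. \<Sum>p2\<in>B. \<Sum>p3\<in>C.
    if path_tgt t p2 = fst p3 \<and> path_concat t p1 (fst p2, snd p2 @ snd p3) = Some q
    then f p1 * g p2 * h p3 else 0)"
proof -
  define BC where "BC = (\<lambda>(p, q). (fst p, snd p @ snd q)) ` (B \<times> C)"
  have "finite BC" using assms(2,3) by (simp add: BC_def)
  moreover have "{q. path_alg_mult t g h q \<noteq> 0} \<subseteq> BC"
    unfolding BC_def
    by (rule subset_trans[OF supp_path_alg_mult_subset image_mono[OF Sigma_mono]]) (use assms in auto)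
  ultimately have BC: "finite BC" "{q. path_alg_mult t g h q \<noteq> 0} \<subseteq> BC" by blast+
  have "path_alg_mult t f (path_alg_mult t g h) q = (\<Sum>p1\<in>A. \<Sum>r\<in>BC. \<Sum>p2\<in>B. \<Sum>p3\<in>C.
      if path_concat t p2 p3 = Some r then if path_concat t p1 r = Some q then f p1 * g p2 * h p3 else 0 else 0)"
    using assms BC
    by (simp add: path_alg_mult_eq_sum_superset[of A BC] path_alg_mult_eq_sum_superset[of B C]
        sum_distrib_left if_then_sum_else_zero cong: if_cong)
      (auto intro!: sum.cong)
  also have "\<dots> = (\<Sum>p1\<in>A. \<Sum>p2\<in>B. \<Sum>p3\<in>C. \<Sum>r\<in>BC.
      if path_concat t p2 p3 = Some r then if path_concat t p1 r = Some q then f p1 * g p2 * h p3 else 0 else 0)"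
    by (rule sum.cong[OF refl], subst sum.swap, rule sum.cong[OF refl], rule sum.swap)
  also have "\<dots> = (\<Sum>p1\<in>A. \<Sum>p2\<in>B. \<Sum>p3\<in>C.
      if path_tgt t p2 = fst p3 \<and> path_concat t p1 (fst p2, snd p2 @ snd p3) = Some q
    then f p1 * g p2 * h p3 else 0)"
  proof -
    have "(fst p2, snd p2 @ snd p3) \<in> BC" if "p2 \<in> B" "p3 \<in> C" for p2 p3
      using that by (force simp: BC_def)
    then show ?thesis
      by (intro sum.cong refl, subst sum_path_concat_eq_Some) (use BC(1) in auto)
  qed
  finally show ?thesis .
qed

lemma path_alg_mult_assoc:
  fixes f g h :: "'v \<times> 'a list \<Rightarrow> 'k::field"
  assumes "finite {q. f q \<noteq> 0}" "finite {q. g q \<noteq> 0}" "finite {q. h q \<noteq> 0}"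
  shows "path_alg_mult t (path_alg_mult t f g) h = path_alg_mult t f (path_alg_mult t g h)"
  using path_alg_mult_assoc_sum_left[OF assms order_refl order_refl order_refl]
    path_alg_mult_assoc_sum_right[OF assms order_refl order_refl order_refl]
  by (simp add: path_concat_assoc fun_eq_iff)

lemma regular_module_simps:
  "mcarrier (regular_module Q0 Q1 s t) = path_alg_carrier Q0 Q1 s t"
  "mzero (regular_module Q0 Q1 s t) = (\<lambda>p. 0)"
  "madd (regular_module Q0 Q1 s t) = (\<lambda>f g p. f p + g p)"
  "mact (regular_module Q0 Q1 s t) = path_alg_mult t"
  unfolding regular_module_def by simp_all

lemma path_ring_simps:
  "rcarrier (path_ring Q0 Q1 s t) = path_alg_carrier Q0 Q1 s t"
  "radd (path_ring Q0 Q1 s t) = (\<lambda>f g p. f p + g p)"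
  "rmult (path_ring Q0 Q1 s t) = path_alg_mult t"
  unfolding path_ring_def by simp_all

lemma sum_fun_apply: "(\<Sum>i\<in>I. f i) x = (\<Sum>i\<in>I. f i x)"
  by (induction I rule: infinite_finite_induct) auto

definition at_vertex :: "'v \<Rightarrow> 'x::zero \<Rightarrow> 'v \<Rightarrow> 'x" where
  "at_vertex v x = (\<lambda>w. if w = v then x else 0)"

locale quiver_rep =
  fixes Q0 :: "'v set" and Q1 :: "'a set" and s t :: "'a \<Rightarrow> 'v"
    and scale :: "'k::field \<Rightarrow> 'x::ab_group_add \<Rightarrow> 'x"
    and V :: "'v \<Rightarrow> 'x set" and X :: "'a \<Rightarrow> 'x \<Rightarrow> 'x"
  assumes quiver: "quiver Q0 Q1 s t" and representation: "representation Q0 Q1 s t scale V X"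
begin

sublocale vs: vector_space scale
  using representation unfolding representation_def by simp

abbreviation KQ :: "('v \<times> 'a list \<Rightarrow> 'k) set" where "KQ \<equiv> path_alg_carrier Q0 Q1 s t"
abbreviation KQ_ring :: "('v \<times> 'a list \<Rightarrow> 'k) rng" where "KQ_ring \<equiv> path_ring Q0 Q1 s t"
abbreviation GX :: "('v \<Rightarrow> 'x, 'v \<times> 'a list \<Rightarrow> 'k) rmod" where "GX \<equiv> G_module Q0 Q1 s t scale V X"

lemma src_in_verts: "a \<in> Q1 \<Longrightarrow> s a \<in> Q0" and tgt_in_verts: "a \<in> Q1 \<Longrightarrow> t a \<in> Q0"
  using quiver unfolding quiver_def by auto

lemma subspace_V: "v \<in> Q0 \<Longrightarrow> vs.subspace (V v)"
  using representation unfolding representation_def by auto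

lemma zero_in_V: "v \<in> Q0 \<Longrightarrow> 0 \<in> V v"
  using subspace_V vs.subspace_0 by blast

lemma arrow_map_in: "a \<in> Q1 \<Longrightarrow> x \<in> V (s a) \<Longrightarrow> X a x \<in> V (t a)"
  and arrow_map_add: "a \<in> Q1 \<Longrightarrow> x \<in> V (s a) \<Longrightarrow> y \<in> V (s a) \<Longrightarrow> X a (x + y) = X a x + X a y"
  and arrow_map_scale: "a \<in> Q1 \<Longrightarrow> x \<in> V (s a) \<Longrightarrow> X a (scale c x) = scale c (X a x)"
  using representation unfolding representation_def by auto

lemma arrow_map_zero: "a \<in> Q1 \<Longrightarrow> X a 0 = 0"
  using arrow_map_add[of a 0 0] zero_in_V[OF src_in_verts] by simp

lemma eval_path_Pair_in:
  "is_path Q0 Q1 s t (v, as) \<Longrightarrow> x \<in> V v \<Longrightarrow> eval_path X (v, as) x \<in> V (path_tgt t (v, as))"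
proof (induction as arbitrary: v x)
  case (Cons a as)
  then show ?case
    by (auto simp: is_path_Cons[OF quiver] path_tgt_Cons eval_path_Cons[where w="t a"] arrow_map_in)
qed simp

lemma eval_path_in: "is_path Q0 Q1 s t p \<Longrightarrow> x \<in> V (fst p) \<Longrightarrow> eval_path X p x \<in> V (path_tgt t p)"
  using eval_path_Pair_in[of "fst p" "snd p"] by simp

lemma eval_path_Pair_linear:
  "is_path Q0 Q1 s t (v, as) \<Longrightarrow> x \<in> V v \<Longrightarrow> y \<in> V v \<Longrightarrow>
   eval_path X (v, as) (x + y) = eval_path X (v, as) x + eval_path X (v, as) y \<and>
   eval_path X (v, as) (scale c x) = scale c (eval_path X (v, as) x)"
proof (induction as arbitrary: v x y)
  case (Cons a as)
  then have a: "a \<in> Q1" "s a = v" "is_path Q0 Q1 s t (t a, as)" by (auto simp: is_path_Cons[OF quiver])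
  show ?case using Cons.IH[OF a(3) arrow_map_in arrow_map_in] Cons.prems a
    by (auto simp: eval_path_Cons[where w="t a"] arrow_map_add arrow_map_scale)
qed simp

lemma eval_path_add:
  "is_path Q0 Q1 s t p \<Longrightarrow> x \<in> V (fst p) \<Longrightarrow> y \<in> V (fst p) \<Longrightarrow>
   eval_path X p (x + y) = eval_path X p x + eval_path X p y"
  using eval_path_Pair_linear[of "fst p" "snd p"] by simp

lemma eval_path_scale:
  "is_path Q0 Q1 s t p \<Longrightarrow> x \<in> V (fst p) \<Longrightarrow> eval_path X p (scale c x) = scale c (eval_path X p x)"
  using eval_path_Pair_linear[of "fst p" "snd p" x x c] by simp

lemma eval_path_zero: "is_path Q0 Q1 s t p \<Longrightarrow> eval_path X p 0 = 0"
  using eval_path_scale[of p 0 0] zero_in_V[OF is_path_fst[of Q0 Q1 s t p]] by simp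

lemma eval_path_sum:
  "is_path Q0 Q1 s t p \<Longrightarrow> (\<And>i. i \<in> I \<Longrightarrow> y i \<in> V (fst p)) \<Longrightarrow>
   eval_path X p (sum y I) = (\<Sum>i\<in>I. eval_path X p (y i))"
proof (induction I rule: infinite_finite_induct)
  case (insert i I)
  then have "sum y I \<in> V (fst p)"
    using subspace_V[OF is_path_fst[of Q0 Q1 s t p]] by (auto intro: vs.subspace_sum)
  with insert show ?case by (simp add: eval_path_add)
qed (simp_all add: eval_path_zero)

lemma KQ_iff: "f \<in> KQ \<longleftrightarrow> finite {p. f p \<noteq> 0} \<and> (\<forall>p. f p \<noteq> 0 \<longrightarrow> is_path Q0 Q1 s t p)"
  unfolding path_alg_carrier_def by simp

lemma finite_supp_KQ: "f \<in> KQ \<Longrightarrow> finite {q. f q \<noteq> 0}"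
  and is_path_supp_KQ: "f \<in> KQ \<Longrightarrow> f q \<noteq> 0 \<Longrightarrow> is_path Q0 Q1 s t q"
  by (simp_all add: KQ_iff)

lemma KQ_subset_closed: "f \<in> KQ \<Longrightarrow> (\<And>q. g q \<noteq> 0 \<Longrightarrow> f q \<noteq> 0) \<Longrightarrow> g \<in> KQ"
  unfolding KQ_iff by (metis (mono_tags, lifting) finite_subset mem_Collect_eq subsetI)

lemma zero_in_KQ: "(\<lambda>_. 0) \<in> KQ"
  by (simp add: KQ_iff)

lemma add_in_KQ: "f \<in> KQ \<Longrightarrow> g \<in> KQ \<Longrightarrow> (\<lambda>q. f q + g q) \<in> KQ"
proof -
  assume fg: "f \<in> KQ" "g \<in> KQ"
  have "{q. f q + g q \<noteq> 0} \<subseteq> {q. f q \<noteq> 0} \<union> {q. g q \<noteq> 0}" by auto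
  with fg show ?thesis unfolding KQ_iff by (auto intro: finite_subset)
qed

lemma scale_in_KQ: "f \<in> KQ \<Longrightarrow> (\<lambda>q. c * f q) \<in> KQ"
  by (erule KQ_subset_closed) simp

lemma uminus_in_KQ: "f \<in> KQ \<Longrightarrow> (\<lambda>q. - f q) \<in> KQ"
  by (erule KQ_subset_closed) simp

lemma sum_in_KQ: "(\<And>i. i \<in> S \<Longrightarrow> h i \<in> KQ) \<Longrightarrow> (\<lambda>q. \<Sum>i\<in>S. h i q) \<in> KQ"
  by (induction S rule: infinite_finite_induct) (auto intro: add_in_KQ zero_in_KQ)

lemma monom_in_KQ: "is_path Q0 Q1 s t p \<Longrightarrow> path_monom c p \<in> KQ"
  unfolding KQ_iff path_monom_def by (auto intro: finite_subset[of _ "{p}"])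

lemma vertex_monom_in_KQ: "v \<in> Q0 \<Longrightarrow> path_monom c (v, []) \<in> KQ"
  by (simp add: monom_in_KQ is_path_Nil)

lemma arrow_monom_in_KQ: "a \<in> Q1 \<Longrightarrow> path_monom c (s a, [a]) \<in> KQ"
  by (simp add: monom_in_KQ is_path_arrow[OF quiver])

lemma mult_in_KQ: "f \<in> KQ \<Longrightarrow> g \<in> KQ \<Longrightarrow> path_alg_mult t f g \<in> KQ"
  by (rule path_alg_mult_in_carrier[OF quiver])

lemma GX_carrier_iff:
  "m \<in> mcarrier GX \<longleftrightarrow> (\<forall>v\<in>Q0. m v \<in> V v) \<and> (\<forall>v. v \<notin> Q0 \<longrightarrow> m v = 0) \<and> finite {v. m v \<noteq> 0}"
  unfolding G_module_def by simp

lemma GX_simps: "mzero GX = (\<lambda>v. 0)" "madd GX = (\<lambda>m m' v. m v + m' v)"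
  unfolding G_module_def by simp_all

lemma G_act_eq_sum:
  "mact GX m f w = (\<Sum>p\<in>{q. f q \<noteq> 0}. if path_tgt t p = w then scale (f p) (eval_path X p (m (fst p))) else 0)"
  unfolding G_module_def by simp

lemma G_act_eq_sum_superset:
  assumes "finite A" "{q. f q \<noteq> 0} \<subseteq> A"
  shows "mact GX m f w = (\<Sum>p\<in>A. if path_tgt t p = w then scale (f p) (eval_path X p (m (fst p))) else 0)"
  unfolding G_act_eq_sum by (rule sum.mono_neutral_left) (use assms in auto)

lemma G_act_monom:
  "mact GX m (path_monom c p) = at_vertex (path_tgt t p) (scale c (eval_path X p (m (fst p))))"
proof
  fix w
  show "mact GX m (path_monom c p) w = at_vertex (path_tgt t p) (scale c (eval_path X p (m (fst p)))) w"
    by (subst G_act_eq_sum_superset[of "{p}"]) (auto simp: path_monom_def at_vertex_def)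
qed

lemma G_act_in_carrier:
  assumes m: "m \<in> mcarrier GX" and f: "f \<in> KQ"
  shows "mact GX m f \<in> mcarrier GX"
proof -
  have paths: "\<And>p. f p \<noteq> 0 \<Longrightarrow> is_path Q0 Q1 s t p" using f by (auto simp: KQ_iff)
  have "mact GX m f w \<in> V w" if w: "w \<in> Q0" for w
    unfolding G_act_eq_sum
  proof (rule vs.subspace_sum[OF subspace_V[OF w]])
    fix p assume "p \<in> {q. f q \<noteq> 0}"
    then have p: "is_path Q0 Q1 s t p" using paths by auto
    have "eval_path X p (m (fst p)) \<in> V (path_tgt t p)"
      using eval_path_in[OF p] m is_path_fst[OF p] by (simp add: GX_carrier_iff)
    then show "(if path_tgt t p = w then scale (f p) (eval_path X p (m (fst p))) else 0) \<in> V w"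
      using vs.subspace_scale[OF subspace_V[OF w]] zero_in_V[OF w] by auto
  qed
  moreover have "mact GX m f w = 0" if "w \<notin> Q0" for w
    unfolding G_act_eq_sum using that paths path_tgt_in_verts[OF quiver] by (auto intro!: sum.neutral)
  moreover have "{w. mact GX m f w \<noteq> 0} \<subseteq> path_tgt t ` {q. f q \<noteq> 0}"
    unfolding G_act_eq_sum by (force elim: sum.not_neutral_contains_not_neutral split: if_splits)
  then have "finite {w. mact GX m f w \<noteq> 0}" using f finite_subset by (auto simp: KQ_iff)
  ultimately show ?thesis by (simp add: GX_carrier_iff)
qed

lemma G_act_add_left:
  assumes "m \<in> mcarrier GX" "m' \<in> mcarrier GX" "f \<in> KQ"
  shows "mact GX (\<lambda>v. m v + m' v) f = (\<lambda>v. mact GX m f v + mact GX m' f v)"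
proof
  fix w
  have "eval_path X p (m (fst p) + m' (fst p)) = eval_path X p (m (fst p)) + eval_path X p (m' (fst p))"
    if "f p \<noteq> 0" for p
    using assms that is_path_supp_KQ is_path_fst[of Q0 Q1 s t p]
    by (intro eval_path_add) (auto simp: GX_carrier_iff)
  then show "mact GX (\<lambda>v. m v + m' v) f w = mact GX m f w + mact GX m' f w"
    unfolding G_act_eq_sum sum.distrib[symmetric] by (intro sum.cong) (auto simp: vs.scale_right_distrib)
qed

lemma G_act_add_right:
  assumes "f \<in> KQ" "g \<in> KQ"
  shows "mact GX m (\<lambda>p. f p + g p) = (\<lambda>v. mact GX m f v + mact GX m g v)"
proof
  fix w
  let ?A = "{q. f q \<noteq> 0} \<union> {q. g q \<noteq> 0}"
  have "finite ?A" using assms by (simp add: KQ_iff)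
  note expand = G_act_eq_sum_superset[OF this]
  show "mact GX m (\<lambda>p. f p + g p) w = mact GX m f w + mact GX m g w"
    by (subst (1 2 3) expand) (auto simp: sum.distrib[symmetric] vs.scale_left_distrib intro!: sum.cong)
qed

lemma G_act_act_eq_sum:
  assumes m: "m \<in> mcarrier GX" and r: "r \<in> KQ" and r': "r' \<in> KQ"
  shows "mact GX (mact GX m r) r' w = (\<Sum>p'\<in>{q. r' q \<noteq> 0}. \<Sum>p\<in>{q. r q \<noteq> 0}.
    if path_tgt t p' = w \<and> path_tgt t p = fst p'
    then scale (r p * r' p') (eval_path X p' (eval_path X p (m (fst p)))) else 0)"
proof -
  have "eval_path X p' (mact GX m r (fst p')) = (\<Sum>p\<in>{q. r q \<noteq> 0}.
      if path_tgt t p = fst p' then scale (r p) (eval_path X p' (eval_path X p (m (fst p)))) else 0)"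
    if p': "r' p' \<noteq> 0" for p'
  proof -
    have p'_path: "is_path Q0 Q1 s t p'" and v: "fst p' \<in> Q0"
      using r' p' is_path_fst[of Q0 Q1 s t p'] by (auto simp: KQ_iff)
    have Vp': "\<And>x c. x \<in> V (fst p') \<Longrightarrow> scale c x \<in> V (fst p')" "0 \<in> V (fst p')"
      using vs.subspace_scale[OF subspace_V[OF v]] zero_in_V[OF v] by auto
    have evp: "eval_path X p (m (fst p)) \<in> V (path_tgt t p)" if "r p \<noteq> 0" for p
      by (intro eval_path_in)
        (use that r m is_path_fst[of Q0 Q1 s t p] in \<open>auto simp: KQ_iff GX_carrier_iff\<close>)
    have "(if path_tgt t p = fst p' then scale (r p) (eval_path X p (m (fst p))) else 0) \<in> V (fst p') \<and>
      eval_path X p' (if path_tgt t p = fst p' then scale (r p) (eval_path X p (m (fst p))) else 0) =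
      (if path_tgt t p = fst p' then scale (r p) (eval_path X p' (eval_path X p (m (fst p)))) else 0)"
      if "r p \<noteq> 0" for p
      using Vp' evp[OF that] by (auto simp: eval_path_scale[OF p'_path] eval_path_zero[OF p'_path])
    then show ?thesis
      unfolding G_act_eq_sum by (subst eval_path_sum[OF p'_path]) (auto intro!: sum.cong)
  qed
  then show ?thesis
    unfolding G_act_eq_sum[of "mact GX m r"]
    by (intro sum.cong refl) (auto simp: vs.scale_sum_right mult.commute intro!: sum.cong)
qed

lemma G_act_mult_eq_sum:
  assumes m: "m \<in> mcarrier GX" and r: "r \<in> KQ" and r': "r' \<in> KQ"
  shows "mact GX m (path_alg_mult t r r') w = (\<Sum>p\<in>{q. r q \<noteq> 0}. \<Sum>p'\<in>{q. r' q \<noteq> 0}.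
    if path_tgt t p' = w \<and> path_tgt t p = fst p'
    then scale (r p * r' p') (eval_path X p' (eval_path X p (m (fst p)))) else 0)"
proof -
  define A where "A = {q. r q \<noteq> 0}"
  define B where "B = {q. r' q \<noteq> 0}"
  define C where "C = (\<lambda>(p, q). (fst p, snd p @ snd q)) ` (A \<times> B)"
  have fin: "finite A" "finite B" "finite C" using r r' by (auto simp: KQ_iff A_def B_def C_def)
  have "mact GX m (path_alg_mult t r r') w = (\<Sum>q\<in>C. \<Sum>p\<in>A. \<Sum>p'\<in>B.
      if path_concat t p p' = Some q
      then if path_tgt t q = w then scale (r p * r' p') (eval_path X q (m (fst q))) else 0 else 0)"
  proof -
    have "{q. path_alg_mult t r r' q \<noteq> 0} \<subseteq> C"
      using supp_path_alg_mult_subset[of t r r'] by (simp add: A_def B_def C_def)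
    then have "mact GX m (path_alg_mult t r r') w = (\<Sum>q\<in>C.
        if path_tgt t q = w then scale (path_alg_mult t r r' q) (eval_path X q (m (fst q))) else 0)"
      by (rule G_act_eq_sum_superset[OF fin(3)])
    then show ?thesis
      by (auto simp: path_alg_mult_def A_def B_def vs.scale_sum_left intro!: sum.cong sum.neutral)
  qed
  also have "\<dots> = (\<Sum>p\<in>A. \<Sum>p'\<in>B. \<Sum>q\<in>C.
      if path_concat t p p' = Some q
      then if path_tgt t q = w then scale (r p * r' p') (eval_path X q (m (fst q))) else 0 else 0)"
    by (subst sum.swap, rule sum.cong[OF refl], subst sum.swap, rule refl)
  also have "\<dots> = (\<Sum>p\<in>A. \<Sum>p'\<in>B. if path_tgt t p' = w \<and> path_tgt t p = fst p'
      then scale (r p * r' p') (eval_path X p' (eval_path X p (m (fst p)))) else 0)"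
  proof -
    have "(fst p, snd p @ snd p') \<in> C" if "p \<in> A" "p' \<in> B" for p p'
      using that by (force simp: C_def)
    then show ?thesis
      by (intro sum.cong refl, subst sum_path_concat_eq_Some)
        (use fin in \<open>auto simp: path_tgt_append eval_path_append\<close>)
  qed
  finally show ?thesis unfolding A_def B_def .
qed

lemma G_act_assoc:
  assumes "m \<in> mcarrier GX" "r \<in> KQ" "r' \<in> KQ"
  shows "mact GX (mact GX m r) r' = mact GX m (path_alg_mult t r r')"
  using G_act_act_eq_sum[OF assms] G_act_mult_eq_sum[OF assms]
  by (simp add: fun_eq_iff sum.swap[of _ "{q. r q \<noteq> 0}"])

lemma rmodule_GX: "rmodule KQ_ring GX"
proof -
  have neg: "\<exists>y\<in>mcarrier GX. madd GX x y = mzero GX" if x: "x \<in> mcarrier GX" for x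
  proof
    show "madd GX x (\<lambda>v. - x v) = mzero GX" by (simp add: GX_simps)
    show "(\<lambda>v. - x v) \<in> mcarrier GX"
      using x vs.subspace_neg[OF subspace_V] by (auto simp: GX_carrier_iff)
  qed
  have add: "madd GX x y \<in> mcarrier GX" if "x \<in> mcarrier GX" "y \<in> mcarrier GX" for x y
  proof -
    have "{v. x v + y v \<noteq> 0} \<subseteq> {v. x v \<noteq> 0} \<union> {v. y v \<noteq> 0}" by auto
    with that show ?thesis
      using vs.subspace_add[OF subspace_V] by (auto simp: GX_carrier_iff GX_simps intro: finite_subset)
  qed
  show ?thesis
    unfolding rmodule_def path_ring_simps
    using neg add zero_in_V G_act_in_carrier G_act_add_left G_act_add_right G_act_assoc
    by (simp add: GX_carrier_iff GX_simps add_ac)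
qed

end

definition transport_rmod :: "('m \<Rightarrow> 'n) \<Rightarrow> ('m, 'r) rmod \<Rightarrow> ('n, 'r) rmod" where
  "transport_rmod \<phi> M = \<lparr> mcarrier = \<phi> ` mcarrier M, mzero = \<phi> (mzero M),
     madd = (\<lambda>a b. \<phi> (madd M (inv_into (mcarrier M) \<phi> a) (inv_into (mcarrier M) \<phi> b))),
     mact = (\<lambda>a r. \<phi> (mact M (inv_into (mcarrier M) \<phi> a) r)) \<rparr>"

lemma transport_rmod_simps:
  "mcarrier (transport_rmod \<phi> M) = \<phi> ` mcarrier M"
  "mzero (transport_rmod \<phi> M) = \<phi> (mzero M)"
  "madd (transport_rmod \<phi> M) a b = \<phi> (madd M (inv_into (mcarrier M) \<phi> a) (inv_into (mcarrier M) \<phi> b))"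
  "mact (transport_rmod \<phi> M) a r = \<phi> (mact M (inv_into (mcarrier M) \<phi> a) r)"
  unfolding transport_rmod_def by simp_all

lemma rmodule_transport:
  assumes M: "rmodule R M" and inj: "inj_on \<phi> (mcarrier M)"
  shows "rmodule R (transport_rmod \<phi> M)"
proof -
  have [simp]: "inv_into (mcarrier M) \<phi> (\<phi> x) = x" if "x \<in> mcarrier M" for x
    using inv_into_f_f[OF inj that] .
  note ax = M[unfolded rmodule_def]
  from ax have "mzero M \<in> mcarrier M"
    "\<And>x y. x \<in> mcarrier M \<Longrightarrow> y \<in> mcarrier M \<Longrightarrow> madd M x y \<in> mcarrier M"
    "\<And>x r. x \<in> mcarrier M \<Longrightarrow> r \<in> rcarrier R \<Longrightarrow> mact M x r \<in> mcarrier M"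
    by auto
  with ax show ?thesis
    unfolding rmodule_def transport_rmod_simps by (auto simp: image_iff) metis+
qed

lemma mod_hom_into_transport:
  assumes "mod_hom R N M f" "inj_on \<phi> (mcarrier M)"
  shows "mod_hom R N (transport_rmod \<phi> M) (\<phi> \<circ> f)"
  using assms unfolding mod_hom_def transport_rmod_simps by (auto simp: inv_into_f_f)

lemma mod_hom_from_transport:
  assumes "rmodule R M" "mod_hom R M N f" "inj_on \<phi> (mcarrier M)" "\<And>x. x \<in> mcarrier M \<Longrightarrow> h (\<phi> x) = f x"
  shows "mod_hom R (transport_rmod \<phi> M) N h"
proof -
  from assms(1) have "\<And>x y. x \<in> mcarrier M \<Longrightarrow> y \<in> mcarrier M \<Longrightarrow> madd M x y \<in> mcarrier M"
    "\<And>x r. x \<in> mcarrier M \<Longrightarrow> r \<in> rcarrier R \<Longrightarrow> mact M x r \<in> mcarrier M"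
    unfolding rmodule_def by auto
  with assms(2-) show ?thesis unfolding mod_hom_def transport_rmod_simps by (auto simp: inv_into_f_f)
qed

lemma mod_hom_transport_comp:
  assumes "mod_hom R (transport_rmod \<phi> M) N q" "inj_on \<phi> (mcarrier M)"
  shows "mod_hom R M N (q \<circ> \<phi>)"
  using assms unfolding mod_hom_def transport_rmod_simps by (auto simp: inv_into_f_f)

section \<open>Cochains\<close>

text \<open>The support conditions say that \<open>f\<^sub>v\<close> takes values in \<open>KQ e\<^sub>v\<close> and \<open>g\<^sub>a\<close> in \<open>KQ e\<^bsub>t a\<^esub>\<close>, where
  \<open>KQ e\<^sub>v\<close> consists of the elements of \<open>KQ\<close> supported on paths ending at \<open>v\<close>.\<close>

definition vertex_cochain ::
  "'v set \<Rightarrow> 'a set \<Rightarrow> ('a \<Rightarrow> 'v) \<Rightarrow> ('a \<Rightarrow> 'v) \<Rightarrow> ('k::field \<Rightarrow> 'x::ab_group_add \<Rightarrow> 'x)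
     \<Rightarrow> ('v \<Rightarrow> 'x set) \<Rightarrow> ('v \<Rightarrow> 'x \<Rightarrow> 'v \<times> 'a list \<Rightarrow> 'k) \<Rightarrow> bool" where
  "vertex_cochain Q0 Q1 s t scale V f \<longleftrightarrow> (\<forall>v\<in>Q0. \<forall>x\<in>V v.
     f v x \<in> path_alg_carrier Q0 Q1 s t \<and> (\<forall>q. f v x q \<noteq> 0 \<longrightarrow> path_tgt t q = v) \<and>
     (\<forall>y\<in>V v. f v (x + y) = (\<lambda>q. f v x q + f v y q)) \<and>
     (\<forall>c. f v (scale c x) = (\<lambda>q. c * f v x q)))"

definition arrow_cochain ::
  "'v set \<Rightarrow> 'a set \<Rightarrow> ('a \<Rightarrow> 'v) \<Rightarrow> ('a \<Rightarrow> 'v) \<Rightarrow> ('k::field \<Rightarrow> 'x::ab_group_add \<Rightarrow> 'x)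
     \<Rightarrow> ('v \<Rightarrow> 'x set) \<Rightarrow> ('a \<Rightarrow> 'x \<Rightarrow> 'v \<times> 'a list \<Rightarrow> 'k) \<Rightarrow> bool" where
  "arrow_cochain Q0 Q1 s t scale V g \<longleftrightarrow> (\<forall>a\<in>Q1. \<forall>x\<in>V (s a).
     g a x \<in> path_alg_carrier Q0 Q1 s t \<and> (\<forall>q. g a x q \<noteq> 0 \<longrightarrow> path_tgt t q = t a) \<and>
     (\<forall>y\<in>V (s a). g a (x + y) = (\<lambda>q. g a x q + g a y q)) \<and>
     (\<forall>c. g a (scale c x) = (\<lambda>q. c * g a x q)))"

definition coboundary ::
  "('a \<Rightarrow> 'v) \<Rightarrow> ('a \<Rightarrow> 'v) \<Rightarrow> ('a \<Rightarrow> 'x \<Rightarrow> 'x) \<Rightarrow> ('v \<Rightarrow> 'x \<Rightarrow> 'v \<times> 'a list \<Rightarrow> 'k::field)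
     \<Rightarrow> 'a \<Rightarrow> 'x \<Rightarrow> 'v \<times> 'a list \<Rightarrow> 'k" where
  "coboundary s t X f a x = (\<lambda>q. path_alg_mult t (f (s a) x) (path_monom 1 (s a, [a])) q - f (t a) (X a x) q)"

definition coboundary_surj ::
  "'v set \<Rightarrow> 'a set \<Rightarrow> ('a \<Rightarrow> 'v) \<Rightarrow> ('a \<Rightarrow> 'v) \<Rightarrow> ('k::field \<Rightarrow> 'x::ab_group_add \<Rightarrow> 'x)
     \<Rightarrow> ('v \<Rightarrow> 'x set) \<Rightarrow> ('a \<Rightarrow> 'x \<Rightarrow> 'x) \<Rightarrow> bool" where
  "coboundary_surj Q0 Q1 s t scale V X \<longleftrightarrow> (\<forall>g :: 'a \<Rightarrow> 'x \<Rightarrow> 'v \<times> 'a list \<Rightarrow> 'k.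
     arrow_cochain Q0 Q1 s t scale V g \<longrightarrow>
     (\<exists>f. vertex_cochain Q0 Q1 s t scale V f \<and> (\<forall>a\<in>Q1. \<forall>x\<in>V (s a). g a x = coboundary s t X f a x)))"

context quiver_rep
begin

definition KQe :: "'v \<Rightarrow> ('v \<times> 'a list \<Rightarrow> 'k) set" where
  "KQe v = {n \<in> KQ. \<forall>q. n q \<noteq> 0 \<longrightarrow> path_tgt t q = v}"

lemma zero_in_KQe: "(\<lambda>_. 0) \<in> KQe v"
  by (simp add: KQe_def zero_in_KQ)

lemma add_in_KQe: "n \<in> KQe v \<Longrightarrow> n' \<in> KQe v \<Longrightarrow> (\<lambda>q. n q + n' q) \<in> KQe v"
  unfolding KQe_def by (auto intro: add_in_KQ) (metis add.right_neutral)

lemma scale_in_KQe: "n \<in> KQe v \<Longrightarrow> (\<lambda>q. c * n q) \<in> KQe v"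
  unfolding KQe_def by (auto intro: scale_in_KQ)

lemma mult_arrow_in_KQe:
  assumes "a \<in> Q1" "n \<in> KQ"
  shows "path_alg_mult t n (path_monom c (s a, [a])) \<in> KQe (t a)"
proof -
  have "path_tgt t q = t a" if "path_monom c (s a, [a]) q \<noteq> 0" for q
    using that by (auto simp: path_monom_def path_tgt_def split: if_splits)
  then show ?thesis
    unfolding KQe_def using assms by (auto intro: mult_in_KQ arrow_monom_in_KQ path_tgt_path_alg_mult)
qed

lemma mult_vertex_unit: "n \<in> KQe v \<Longrightarrow> path_alg_mult t n (path_monom 1 (v, [])) = n"
  unfolding KQe_def by (auto simp: path_alg_mult_monom_trivial finite_supp_KQ fun_eq_iff)

lemma vertex_cochainD:
  assumes "vertex_cochain Q0 Q1 s t scale V f" "v \<in> Q0" "x \<in> V v"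
  shows "f v x \<in> KQe v" "y \<in> V v \<Longrightarrow> f v (x + y) = (\<lambda>q. f v x q + f v y q)"
    "f v (scale c x) = (\<lambda>q. c * f v x q)"
  using assms unfolding vertex_cochain_def KQe_def by blast+

lemma arrow_cochainD:
  assumes "arrow_cochain Q0 Q1 s t scale V g" "a \<in> Q1" "x \<in> V (s a)"
  shows "g a x \<in> KQe (t a)" "y \<in> V (s a) \<Longrightarrow> g a (x + y) = (\<lambda>q. g a x q + g a y q)"
    "g a (scale c x) = (\<lambda>q. c * g a x q)"
  using assms unfolding arrow_cochain_def KQe_def by blast+

end

section \<open>An arrow cochain defines an extension of \<open>G(X)\<close> by \<open>KQ\<close>\<close>

definition prod_scale :: "('k \<Rightarrow> 'x \<Rightarrow> 'x) \<Rightarrow> 'k \<Rightarrow> ('p \<Rightarrow> 'k::field) \<times> 'x \<Rightarrow> ('p \<Rightarrow> 'k) \<times> 'x" where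
  "prod_scale scale c y = ((\<lambda>q. c * fst y q), scale c (snd y))"

text \<open>The middle term is \<open>G(Y)\<close> for the representation \<open>Y\<^sub>v = KQ e\<^sub>v \<oplus> X\<^sub>v\<close> with
  \<open>Y\<^sub>a (n, x) = (n a + g\<^sub>a x, X\<^sub>a x)\<close>.\<close>

locale arrow_cochain_rep = quiver_rep Q0 Q1 s t scale V X
  for Q0 :: "'v set" and Q1 :: "'a set" and s t :: "'a \<Rightarrow> 'v"
    and scale :: "'k::field \<Rightarrow> 'x::ab_group_add \<Rightarrow> 'x"
    and V :: "'v \<Rightarrow> 'x set" and X :: "'a \<Rightarrow> 'x \<Rightarrow> 'x" +
  fixes g :: "'a \<Rightarrow> 'x \<Rightarrow> 'v \<times> 'a list \<Rightarrow> 'k"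
  assumes arrow_cochain: "arrow_cochain Q0 Q1 s t scale V g"
begin

definition ext_space :: "'v \<Rightarrow> (('v \<times> 'a list \<Rightarrow> 'k) \<times> 'x) set" where
  "ext_space v = KQe v \<times> V v"

definition ext_arrow :: "'a \<Rightarrow> ('v \<times> 'a list \<Rightarrow> 'k) \<times> 'x \<Rightarrow> ('v \<times> 'a list \<Rightarrow> 'k) \<times> 'x" where
  "ext_arrow a y = ((\<lambda>q. path_alg_mult t (fst y) (path_monom 1 (s a, [a])) q + g a (snd y) q), X a (snd y))"

lemma cochain_zero:
  assumes "a \<in> Q1" shows "g a 0 = (\<lambda>_. 0)"
  using arrow_cochainD(3)[OF arrow_cochain assms zero_in_V[OF src_in_verts[OF assms]], of 0] by simp

lemma vector_space_prod_scale: "vector_space (prod_scale scale)"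
  by unfold_locales
    (auto simp: prod_scale_def fun_eq_iff algebra_simps vs.scale_right_distrib vs.scale_left_distrib)

lemma ext_space_fst_finite: "y \<in> ext_space v \<Longrightarrow> finite {q. fst y q \<noteq> 0}"
  by (auto simp: ext_space_def KQe_def finite_supp_KQ)

lemma ext_arrow_in:
  assumes a: "a \<in> Q1" and y: "y \<in> ext_space (s a)"
  shows "ext_arrow a y \<in> ext_space (t a)"
proof -
  have "fst y \<in> KQ" "snd y \<in> V (s a)" using y by (auto simp: ext_space_def KQe_def)
  then show ?thesis
    unfolding ext_arrow_def ext_space_def
    using add_in_KQe mult_arrow_in_KQe[OF a] arrow_cochainD(1)[OF arrow_cochain a] arrow_map_in[OF a]
    by simp
qed

lemma ext_arrow_add:
  assumes a: "a \<in> Q1" and y: "y \<in> ext_space (s a)" and y': "y' \<in> ext_space (s a)"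
  shows "ext_arrow a (y + y') = ext_arrow a y + ext_arrow a y'"
proof -
  have "path_alg_mult t (\<lambda>q. fst y q + fst y' q) (path_monom 1 (s a, [a])) =
    (\<lambda>q. path_alg_mult t (fst y) (path_monom 1 (s a, [a])) q + path_alg_mult t (fst y') (path_monom 1 (s a, [a])) q)"
    using ext_space_fst_finite[OF y] ext_space_fst_finite[OF y']
    by (intro path_alg_mult_add_left) (simp_all add: supp_path_monom)
  moreover have "snd y \<in> V (s a)" "snd y' \<in> V (s a)" using y y' by (auto simp: ext_space_def)
  ultimately show ?thesis
    using arrow_cochainD(2)[OF arrow_cochain a] arrow_map_add[OF a]
    by (simp add: ext_arrow_def plus_fun_def fun_eq_iff)
qed

lemma ext_arrow_scale:
  assumes a: "a \<in> Q1" and y: "y \<in> ext_space (s a)"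
  shows "ext_arrow a (prod_scale scale c y) = prod_scale scale c (ext_arrow a y)"
proof -
  have "path_alg_mult t (\<lambda>q. c * fst y q) (path_monom 1 (s a, [a])) =
    (\<lambda>q. c * path_alg_mult t (fst y) (path_monom 1 (s a, [a])) q)"
    using ext_space_fst_finite[OF y] by (intro path_alg_mult_scale_left) (simp_all add: supp_path_monom)
  moreover have "snd y \<in> V (s a)" using y by (auto simp: ext_space_def)
  ultimately show ?thesis
    using arrow_cochainD(3)[OF arrow_cochain a] arrow_map_scale[OF a]
    by (simp add: ext_arrow_def prod_scale_def distrib_left)
qed

lemma representation_ext: "representation Q0 Q1 s t (prod_scale scale) ext_space ext_arrow"
proof -
  interpret ps: vector_space "prod_scale scale" by (rule vector_space_prod_scale)
  have "ps.subspace (ext_space v)" if "v \<in> Q0" for v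
    unfolding ps.subspace_def ext_space_def
    using zero_in_KQe add_in_KQe scale_in_KQe
      zero_in_V[OF that] vs.subspace_add[OF subspace_V[OF that]] vs.subspace_scale[OF subspace_V[OF that]]
    by (simp add: prod_scale_def zero_fun_def plus_fun_def zero_prod_def mem_Times_iff)
  then show ?thesis
    unfolding representation_def
    using vector_space_prod_scale ext_arrow_in ext_arrow_add ext_arrow_scale by blast
qed

sublocale ext: quiver_rep Q0 Q1 s t "prod_scale scale" ext_space ext_arrow
  by unfold_locales (fact quiver, fact representation_ext)

abbreviation GY :: "('v \<Rightarrow> ('v \<times> 'a list \<Rightarrow> 'k) \<times> 'x, 'v \<times> 'a list \<Rightarrow> 'k) rmod" where
  "GY \<equiv> G_module Q0 Q1 s t (prod_scale scale) ext_space ext_arrow"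

definition ext_incl :: "('v \<times> 'a list \<Rightarrow> 'k) \<Rightarrow> 'v \<Rightarrow> ('v \<times> 'a list \<Rightarrow> 'k) \<times> 'x" where
  "ext_incl n = (\<lambda>v. (restrict_tgt t v n, 0))"

text \<open>An element of \<open>G(Y)\<close> is determined by its two components, \<open>\<Sum>\<^sub>v n\<^sub>v \<in> KQ\<close> and \<open>(x\<^sub>v)\<^sub>v \<in> G(X)\<close>,
  so \<open>G(Y)\<close> can be carried over to the type of pairs over which \<^const>\<open>Ext1_vanishes\<close> quantifies.\<close>

definition ext_flatten :: "('v \<Rightarrow> ('v \<times> 'a list \<Rightarrow> 'k) \<times> 'x) \<Rightarrow> ('v \<times> 'a list \<Rightarrow> 'k) \<times> ('v \<Rightarrow> 'x)" where
  "ext_flatten y = ((\<lambda>q. fst (y (path_tgt t q)) q), (\<lambda>v. snd (y v)))"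

lemma restrict_tgt_in_KQe: "n \<in> KQ \<Longrightarrow> restrict_tgt t v n \<in> KQe v"
  unfolding KQe_def restrict_tgt_def by (auto intro!: KQ_subset_closed[of n] split: if_splits)

lemma eval_path_ext_KQe:
  "is_path Q0 Q1 s t (v, as) \<Longrightarrow> n \<in> KQe v \<Longrightarrow>
   eval_path ext_arrow (v, as) (n, 0) = (path_alg_mult t n (path_monom 1 (v, as)), 0)"
proof (induction as arbitrary: v n)
  case Nil
  then show ?case by (simp add: mult_vertex_unit)
next
  case (Cons a as)
  from Cons.prems(1) have a: "a \<in> Q1" "s a = v" "is_path Q0 Q1 s t (t a, as)"
    by (auto simp: is_path_Cons[OF quiver])
  define m where "m = path_alg_mult t n (path_monom 1 (s a, [a]))"
  have n: "n \<in> KQ" using Cons.prems(2) by (simp add: KQe_def)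
  have "eval_path ext_arrow (v, a # as) (n, 0) = eval_path ext_arrow (t a, as) (m, 0)"
    using cochain_zero[OF a(1)] arrow_map_zero[OF a(1)]
    by (simp add: eval_path_Cons[where w="t a"] ext_arrow_def m_def)
  also have "\<dots> = (path_alg_mult t m (path_monom 1 (t a, as)), 0)"
    using Cons.IH[OF a(3)] mult_arrow_in_KQe[OF a(1) n] by (simp add: m_def)
  also have "path_alg_mult t m (path_monom 1 (t a, as)) =
      path_alg_mult t n (path_alg_mult t (path_monom 1 (s a, [a])) (path_monom 1 (t a, as)))"
    unfolding m_def by (rule path_alg_mult_assoc) (simp_all add: finite_supp_KQ[OF n] supp_path_monom)
  also have "path_alg_mult t (path_monom 1 (s a, [a])) (path_monom 1 (t a, as)) = path_monom 1 (v, a # as)"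
    using a(2) by (simp add: path_alg_mult_monom_monom path_tgt_def)
  finally show ?case .
qed

lemma ext_incl_in_carrier: "n \<in> KQ \<Longrightarrow> ext_incl n \<in> mcarrier GY"
proof -
  assume n: "n \<in> KQ"
  have "restrict_tgt t v n = (\<lambda>_. 0)" if "v \<notin> Q0" for v
    using that is_path_supp_KQ[OF n] path_tgt_in_verts[OF quiver]
    by (fastforce simp: restrict_tgt_def)
  moreover have "{v. ext_incl n v \<noteq> 0} \<subseteq> path_tgt t ` {q. n q \<noteq> 0}"
    by (force simp: ext_incl_def restrict_tgt_def zero_prod_def zero_fun_def fun_eq_iff split: if_splits)
  then have "finite {v. ext_incl n v \<noteq> 0}" using finite_supp_KQ[OF n] finite_subset by blast
  ultimately show ?thesis
    using n restrict_tgt_in_KQe zero_in_V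
    by (auto simp: ext.GX_carrier_iff ext_incl_def ext_space_def zero_prod_def zero_fun_def)
qed

lemma ext_incl_act:
  assumes n: "n \<in> KQ" and r: "r \<in> KQ"
  shows "ext_incl (path_alg_mult t n r) = mact GY (ext_incl n) r"
proof
  fix w
  define M where "M p = path_alg_mult t (restrict_tgt t (fst p) n) (path_monom 1 p)" for p
  have "eval_path ext_arrow p (ext_incl n (fst p)) = (M p, 0)" if "r p \<noteq> 0" for p
    using that eval_path_ext_KQe[of "fst p" "snd p"] is_path_supp_KQ[OF r] restrict_tgt_in_KQe[OF n]
    by (simp add: ext_incl_def M_def)
  then have "mact GY (ext_incl n) r w = (\<Sum>p\<in>{q. r q \<noteq> 0}. if path_tgt t p = w then ((\<lambda>q. r p * M p q), 0) else 0)"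
    unfolding ext.G_act_eq_sum by (intro sum.cong refl) (simp add: prod_scale_def)
  then show "ext_incl (path_alg_mult t n r) w = mact GY (ext_incl n) r w"
    using restrict_tgt_path_alg_mult[OF finite_supp_KQ[OF n], where w=w and r=r]
    by (auto simp: ext_incl_def M_def fun_eq_iff fst_sum snd_sum sum_fun_apply intro!: prod_eqI sum.cong sum.neutral)
qed

lemma mod_hom_ext_incl: "mod_hom KQ_ring (regular_module Q0 Q1 s t) GY ext_incl"
  unfolding mod_hom_def regular_module_simps path_ring_simps
  using ext_incl_in_carrier ext_incl_act
  by (auto simp: ext.GX_simps ext_incl_def restrict_tgt_def fun_eq_iff)

lemma snd_eval_path_ext: "snd (eval_path ext_arrow p y) = eval_path X p (snd y)"
proof -
  have "snd (foldl (\<lambda>y a. ext_arrow a y) y as) = foldl (\<lambda>x a. X a x) (snd y) as" for as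
    by (induction as arbitrary: y) (simp_all add: ext_arrow_def)
  then show ?thesis unfolding eval_path_def .
qed

lemma mod_hom_ext_snd: "mod_hom KQ_ring GY GX (\<lambda>y v. snd (y v))"
  unfolding mod_hom_def path_ring_simps
proof (intro conjI ballI)
  fix y assume "y \<in> mcarrier GY"
  moreover have "{v. snd (y v) \<noteq> 0} \<subseteq> {v. y v \<noteq> 0}" by auto
  ultimately show "(\<lambda>v. snd (y v)) \<in> mcarrier GX"
    by (auto simp: ext.GX_carrier_iff GX_carrier_iff ext_space_def intro: finite_subset)
next
  fix y r
  show "(\<lambda>v. snd (mact GY y r v)) = mact GX (\<lambda>v. snd (y v)) r"
    unfolding ext.G_act_eq_sum G_act_eq_sum snd_sum
    by (auto simp: prod_scale_def snd_eval_path_ext intro!: sum.cong)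
qed (simp add: ext.GX_simps GX_simps)

lemma ext_carrier_tgt: "y \<in> mcarrier GY \<Longrightarrow> fst (y v) q \<noteq> 0 \<Longrightarrow> path_tgt t q = v"
  by (cases "v \<in> Q0") (auto simp: ext.GX_carrier_iff ext_space_def KQe_def)

lemma inj_on_ext_flatten: "inj_on ext_flatten (mcarrier GY)"
proof (rule inj_onI)
  fix y y' assume y: "y \<in> mcarrier GY" and y': "y' \<in> mcarrier GY" and eq: "ext_flatten y = ext_flatten y'"
  have "fst (y v) q = fst (y' v) q" for v q
    using fun_cong[OF arg_cong[OF eq, of fst], of q] ext_carrier_tgt[OF y, of v q] ext_carrier_tgt[OF y', of v q]
    by (cases "path_tgt t q = v") (auto simp: ext_flatten_def, metis)
  moreover have "snd (y v) = snd (y' v)" for v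
    using fun_cong[OF arg_cong[OF eq, of snd], of v] by (simp add: ext_flatten_def)
  ultimately show "y = y'" by (simp add: fun_eq_iff prod_eq_iff)
qed

lemma ext_flatten_ext_incl: "ext_flatten (ext_incl n) = (n, \<lambda>v. 0)"
  unfolding ext_flatten_def ext_incl_def restrict_tgt_def by simp

definition ext_module :: "(('v \<times> 'a list \<Rightarrow> 'k) \<times> ('v \<Rightarrow> 'x), 'v \<times> 'a list \<Rightarrow> 'k) rmod" where
  "ext_module = transport_rmod ext_flatten GY"

lemma ext_kernel:
  "{z \<in> mcarrier ext_module. snd z = mzero GX} = (ext_flatten \<circ> ext_incl) ` KQ"
proof (intro equalityI subsetI)
  fix z assume "z \<in> {z \<in> mcarrier ext_module. snd z = mzero GX}"
  then obtain y where y: "y \<in> mcarrier GY" and z: "z = ext_flatten y" and snd_y: "\<And>v. snd (y v) = 0"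
    by (auto simp: ext_module_def transport_rmod_simps GX_simps ext_flatten_def fun_eq_iff)
  define n where "n = fst z"
  have n_eq: "n q = fst (y (path_tgt t q)) q" for q by (simp add: n_def z ext_flatten_def)
  have fst_y: "fst (y v) \<in> KQ" for v
    using y zero_in_KQ by (cases "v \<in> Q0") (auto simp: ext.GX_carrier_iff ext_space_def KQe_def zero_prod_def zero_fun_def)
  have "n = (\<lambda>q. \<Sum>v\<in>{v. y v \<noteq> 0}. fst (y v) q)"
  proof
    fix q
    have "(\<Sum>v\<in>{v. y v \<noteq> 0}. fst (y v) q) = (\<Sum>v\<in>{v. y v \<noteq> 0}. if v = path_tgt t q then fst (y v) q else 0)"
      by (intro sum.cong refl) (use ext_carrier_tgt[OF y] in metis)
    then show "n q = (\<Sum>v\<in>{v. y v \<noteq> 0}. fst (y v) q)"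
      using y by (auto simp: n_eq ext.GX_carrier_iff)
  qed
  then have n: "n \<in> KQ" using fst_y by (simp add: sum_in_KQ)
  have "y = ext_incl n"
    using ext_carrier_tgt[OF y] snd_y
    by (auto simp: ext_incl_def restrict_tgt_def n_eq fun_eq_iff prod_eq_iff)
  then show "z \<in> (ext_flatten \<circ> ext_incl) ` KQ" using n z by auto
next
  fix z assume "z \<in> (ext_flatten \<circ> ext_incl) ` KQ"
  then show "z \<in> {z \<in> mcarrier ext_module. snd z = mzero GX}"
    using ext_incl_in_carrier ext_flatten_ext_incl
    by (auto simp: ext_module_def transport_rmod_simps GX_simps) (metis image_eqI)
qed

lemma ext_short_exact:
  "rmodule KQ_ring ext_module \<and>
   mod_hom KQ_ring (regular_module Q0 Q1 s t) ext_module (ext_flatten \<circ> ext_incl) \<and>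
   mod_hom KQ_ring ext_module GX snd \<and>
   inj_on (ext_flatten \<circ> ext_incl) (mcarrier (regular_module Q0 Q1 s t)) \<and>
   snd ` mcarrier ext_module = mcarrier GX \<and>
   {z \<in> mcarrier ext_module. snd z = mzero GX} = (ext_flatten \<circ> ext_incl) ` mcarrier (regular_module Q0 Q1 s t)"
proof (intro conjI)
  show "mod_hom KQ_ring ext_module GX snd"
    unfolding ext_module_def
    by (rule mod_hom_from_transport[OF ext.rmodule_GX mod_hom_ext_snd inj_on_ext_flatten])
      (simp add: ext_flatten_def)
  show "snd ` mcarrier ext_module = mcarrier GX"
  proof (intro equalityI subsetI)
    fix m assume m: "m \<in> mcarrier GX"
    have "{v. ((\<lambda>_. 0), m v) \<noteq> 0} \<subseteq> {v. m v \<noteq> 0}" by (auto simp: zero_prod_def)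
    with m have "(\<lambda>v. ((\<lambda>_. 0), m v)) \<in> mcarrier GY"
      by (auto simp: ext.GX_carrier_iff GX_carrier_iff ext_space_def zero_in_KQe zero_prod_def
          zero_fun_def intro: finite_subset)
    then show "m \<in> snd ` mcarrier ext_module"
      by (force simp: ext_module_def transport_rmod_simps ext_flatten_def)
  qed (use mod_hom_ext_snd in \<open>auto simp: ext_module_def transport_rmod_simps ext_flatten_def mod_hom_def\<close>)
qed (auto simp: ext_module_def regular_module_simps ext_flatten_ext_incl inj_on_def ext_kernel[unfolded ext_module_def]
  intro: rmodule_transport ext.rmodule_GX inj_on_ext_flatten mod_hom_into_transport mod_hom_ext_incl)

lemma at_vertex_ext_in_carrier: "v \<in> Q0 \<Longrightarrow> x \<in> V v \<Longrightarrow> at_vertex v ((\<lambda>_. 0), x) \<in> mcarrier GY"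
proof -
  assume "v \<in> Q0" "x \<in> V v"
  moreover have "{w. at_vertex v ((\<lambda>_. 0), x) w \<noteq> 0} \<subseteq> {v}" by (auto simp: at_vertex_def)
  then have "finite {w. at_vertex v ((\<lambda>_. 0), x) w \<noteq> 0}" by (rule finite_subset) simp
  ultimately show ?thesis
    by (auto simp: ext.GX_carrier_iff at_vertex_def ext_space_def zero_in_KQe zero_in_V
        zero_prod_def zero_fun_def)
qed

lemma ext_act_arrow:
  assumes a: "a \<in> Q1" and x: "x \<in> V (s a)"
  shows "mact GY (at_vertex (s a) ((\<lambda>_. 0), x)) (path_monom 1 (s a, [a])) =
    madd GY (ext_incl (g a x)) (at_vertex (t a) ((\<lambda>_. 0), X a x))"
proof
  fix w
  have "g a x \<in> KQe (t a)" by (rule arrow_cochainD(1)[OF arrow_cochain a x])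
  then have "restrict_tgt t w (g a x) = (if w = t a then g a x else (\<lambda>_. 0))"
    by (auto simp: restrict_tgt_def KQe_def fun_eq_iff)
  moreover have "eval_path ext_arrow (s a, [a]) ((\<lambda>_. 0), x) = (g a x, X a x)"
    by (simp add: eval_path_def ext_arrow_def)
  ultimately show "mact GY (at_vertex (s a) ((\<lambda>_. 0), x)) (path_monom 1 (s a, [a])) w =
    madd GY (ext_incl (g a x)) (at_vertex (t a) ((\<lambda>_. 0), X a x)) w"
    by (simp add: ext.G_act_monom ext.GX_simps at_vertex_def path_tgt_def prod_scale_def ext_incl_def
        zero_prod_def zero_fun_def)
qed

context
  fixes F :: "('v \<Rightarrow> ('v \<times> 'a list \<Rightarrow> 'k) \<times> 'x) \<Rightarrow> 'v \<times> 'a list \<Rightarrow> 'k"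
  assumes F_hom: "mod_hom KQ_ring GY (regular_module Q0 Q1 s t) F"
    and F_retraction: "\<And>n. n \<in> KQ \<Longrightarrow> F (ext_incl n) = n"
begin

definition retraction_cochain :: "'v \<Rightarrow> 'x \<Rightarrow> 'v \<times> 'a list \<Rightarrow> 'k" where
  "retraction_cochain v x = F (at_vertex v ((\<lambda>_. 0), x))"

lemma F_in: "y \<in> mcarrier GY \<Longrightarrow> F y \<in> KQ"
  and F_add: "y \<in> mcarrier GY \<Longrightarrow> y' \<in> mcarrier GY \<Longrightarrow> F (madd GY y y') = (\<lambda>q. F y q + F y' q)"
  and F_act: "y \<in> mcarrier GY \<Longrightarrow> r \<in> KQ \<Longrightarrow> F (mact GY y r) = path_alg_mult t (F y) r"
  using F_hom unfolding mod_hom_def regular_module_simps path_ring_simps by blast+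

lemma retraction_cochain_scale_vertex:
  assumes "v \<in> Q0" "x \<in> V v"
  shows "retraction_cochain v (scale c x) = path_alg_mult t (retraction_cochain v x) (path_monom c (v, []))"
proof -
  have "at_vertex v ((\<lambda>_. 0), scale c x) = mact GY (at_vertex v ((\<lambda>_. 0), x)) (path_monom c (v, []))"
    by (auto simp: ext.G_act_monom at_vertex_def prod_scale_def fun_eq_iff)
  then show ?thesis
    unfolding retraction_cochain_def
    using F_act[OF at_vertex_ext_in_carrier[OF assms] vertex_monom_in_KQ[OF assms(1)]] by simp
qed

lemma vertex_cochain_retraction: "vertex_cochain Q0 Q1 s t scale V retraction_cochain"
  unfolding vertex_cochain_def
proof (intro ballI conjI allI impI)
  fix v x assume v: "v \<in> Q0" and x: "x \<in> V v"
  show in_KQ: "retraction_cochain v x \<in> KQ"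
    unfolding retraction_cochain_def by (rule F_in[OF at_vertex_ext_in_carrier[OF v x]])
  have scale_eq: "retraction_cochain v (scale c x) =
    (\<lambda>q. if path_tgt t q = v then retraction_cochain v x q * c else 0)" for c
    using retraction_cochain_scale_vertex[OF v x] path_alg_mult_monom_trivial finite_supp_KQ[OF in_KQ]
    by simp
  show tgt: "path_tgt t q = v" if "retraction_cochain v x q \<noteq> 0" for q
    using that fun_cong[OF scale_eq[of 1], of q] by (auto split: if_splits)
  show "retraction_cochain v (scale c x) = (\<lambda>q. c * retraction_cochain v x q)" for c
    using scale_eq tgt by (auto simp: fun_eq_iff)
  fix y assume y: "y \<in> V v"
  have "at_vertex v ((\<lambda>_. 0), x + y) = madd GY (at_vertex v ((\<lambda>_. 0), x)) (at_vertex v ((\<lambda>_. 0), y))"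
    by (auto simp: ext.GX_simps at_vertex_def fun_eq_iff)
  then show "retraction_cochain v (x + y) = (\<lambda>q. retraction_cochain v x q + retraction_cochain v y q)"
    unfolding retraction_cochain_def using F_add at_vertex_ext_in_carrier v x y by simp
qed

lemma coboundary_retraction:
  assumes a: "a \<in> Q1" and x: "x \<in> V (s a)"
  shows "g a x = coboundary s t X retraction_cochain a x"
proof -
  have g: "g a x \<in> KQ" using arrow_cochainD(1)[OF arrow_cochain a x] by (simp add: KQe_def)
  have "path_alg_mult t (retraction_cochain (s a) x) (path_monom 1 (s a, [a])) =
      F (mact GY (at_vertex (s a) ((\<lambda>_. 0), x)) (path_monom 1 (s a, [a])))"
    unfolding retraction_cochain_def
    by (rule F_act[symmetric, OF at_vertex_ext_in_carrier[OF src_in_verts[OF a] x] arrow_monom_in_KQ[OF a]])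
  also have "\<dots> = F (madd GY (ext_incl (g a x)) (at_vertex (t a) ((\<lambda>_. 0), X a x)))"
    by (simp only: ext_act_arrow[OF a x])
  also have "\<dots> = (\<lambda>q. g a x q + retraction_cochain (t a) (X a x) q)"
    unfolding retraction_cochain_def
    using F_add[OF ext_incl_in_carrier[OF g] at_vertex_ext_in_carrier[OF tgt_in_verts[OF a] arrow_map_in[OF a x]]]
      F_retraction[OF g] by simp
  finally show ?thesis by (simp add: coboundary_def fun_eq_iff)
qed

end

end

context quiver_rep
begin

lemma coboundary_surj_if_Ext1_vanishes:
  assumes "Ext1_vanishes KQ_ring GX (regular_module Q0 Q1 s t)"
  shows "coboundary_surj Q0 Q1 s t scale V X"
  unfolding coboundary_surj_def
proof (intro allI impI)
  fix g assume "arrow_cochain Q0 Q1 s t scale V g"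
  then interpret arrow_cochain_rep Q0 Q1 s t scale V X g
    by unfold_locales
  obtain q where q: "mod_hom KQ_ring ext_module (regular_module Q0 Q1 s t) q"
    and q_incl: "\<forall>n\<in>KQ. q (ext_flatten (ext_incl n)) = n"
    using assms[unfolded Ext1_vanishes_def, rule_format, OF ext_short_exact]
    by (auto simp: regular_module_simps)
  have F: "mod_hom KQ_ring GY (regular_module Q0 Q1 s t) (q \<circ> ext_flatten)"
    using mod_hom_transport_comp[OF q[unfolded ext_module_def] inj_on_ext_flatten] .
  show "\<exists>f. vertex_cochain Q0 Q1 s t scale V f \<and> (\<forall>a\<in>Q1. \<forall>x\<in>V (s a). g a x = coboundary s t X f a x)"
    using vertex_cochain_retraction[OF F] coboundary_retraction[OF F] q_incl by auto
qed

end

section \<open>Splitting extensions when every arrow cochain is a coboundary\<close>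

locale quiver_extension = quiver_rep Q0 Q1 s t scale V X
  for Q0 :: "'v set" and Q1 :: "'a set" and s t :: "'a \<Rightarrow> 'v"
    and scale :: "'k::field \<Rightarrow> 'x::ab_group_add \<Rightarrow> 'x"
    and V :: "'v \<Rightarrow> 'x set" and X :: "'a \<Rightarrow> 'x \<Rightarrow> 'x" +
  fixes E :: "('e, 'v \<times> 'a list \<Rightarrow> 'k) rmod"
    and i :: "('v \<times> 'a list \<Rightarrow> 'k) \<Rightarrow> 'e" and p :: "'e \<Rightarrow> 'v \<Rightarrow> 'x"
  assumes E_rmodule: "rmodule KQ_ring E"
    and i_hom: "mod_hom KQ_ring (regular_module Q0 Q1 s t) E i"
    and p_hom: "mod_hom KQ_ring E GX p"
    and i_inj: "inj_on i KQ"
    and p_surj: "p ` mcarrier E = mcarrier GX"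
    and exact: "{x \<in> mcarrier E. p x = mzero GX} = i ` KQ"
begin

definition E_group :: "'e monoid" where
  "E_group = \<lparr>carrier = mcarrier E, mult = madd E, one = mzero E\<rparr>"

lemma E_group_simps [simp]: "carrier E_group = mcarrier E" "mult E_group = madd E" "one E_group = mzero E"
  unfolding E_group_def by simp_all

lemma E_axioms:
  "mzero E \<in> mcarrier E"
  "\<And>x y. x \<in> mcarrier E \<Longrightarrow> y \<in> mcarrier E \<Longrightarrow> madd E x y \<in> mcarrier E"
  "\<And>x y z. x \<in> mcarrier E \<Longrightarrow> y \<in> mcarrier E \<Longrightarrow> z \<in> mcarrier E \<Longrightarrow>
     madd E (madd E x y) z = madd E x (madd E y z)"
  "\<And>x y. x \<in> mcarrier E \<Longrightarrow> y \<in> mcarrier E \<Longrightarrow> madd E x y = madd E y x"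
  "\<And>x. x \<in> mcarrier E \<Longrightarrow> madd E (mzero E) x = x"
  "\<And>x. x \<in> mcarrier E \<Longrightarrow> \<exists>y\<in>mcarrier E. madd E x y = mzero E"
  "\<And>x r. x \<in> mcarrier E \<Longrightarrow> r \<in> KQ \<Longrightarrow> mact E x r \<in> mcarrier E"
  "\<And>x y r. x \<in> mcarrier E \<Longrightarrow> y \<in> mcarrier E \<Longrightarrow> r \<in> KQ \<Longrightarrow>
     mact E (madd E x y) r = madd E (mact E x r) (mact E y r)"
  "\<And>x r r'. x \<in> mcarrier E \<Longrightarrow> r \<in> KQ \<Longrightarrow> r' \<in> KQ \<Longrightarrow>
     mact E x (\<lambda>q. r q + r' q) = madd E (mact E x r) (mact E x r')"
  "\<And>x r r'. x \<in> mcarrier E \<Longrightarrow> r \<in> KQ \<Longrightarrow> r' \<in> KQ \<Longrightarrow>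
     mact E (mact E x r) r' = mact E x (path_alg_mult t r r')"
  using E_rmodule unfolding rmodule_def path_ring_simps by auto

lemmas E_zero_closed = E_axioms(1) and E_add_closed = E_axioms(2) and E_add_assoc = E_axioms(3)
  and E_add_comm = E_axioms(4) and E_act_closed = E_axioms(7) and E_act_add_left = E_axioms(8)
  and E_act_add_right = E_axioms(9) and E_act_act = E_axioms(10)

sublocale E_grp: comm_group E_group
proof (rule comm_groupI)
  fix x assume "x \<in> carrier E_group"
  then show "\<exists>y\<in>carrier E_group. y \<otimes>\<^bsub>E_group\<^esub> x = \<one>\<^bsub>E_group\<^esub>"
    using E_axioms(6) E_add_comm by fastforce
qed (use E_axioms in auto)

abbreviation E_neg :: "'e \<Rightarrow> 'e" where "E_neg \<equiv> m_inv E_group"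

abbreviation E_sum :: "('b \<Rightarrow> 'e) \<Rightarrow> 'b set \<Rightarrow> 'e" where "E_sum \<equiv> finprod E_group"

lemma E_neg_closed: "x \<in> mcarrier E \<Longrightarrow> E_neg x \<in> mcarrier E"
  and E_add_neg: "x \<in> mcarrier E \<Longrightarrow> madd E x (E_neg x) = mzero E"
  and E_neg_add: "x \<in> mcarrier E \<Longrightarrow> madd E (E_neg x) x = mzero E"
  and E_add_zero: "x \<in> mcarrier E \<Longrightarrow> madd E x (mzero E) = x"
  and E_add_left_comm: "x \<in> mcarrier E \<Longrightarrow> y \<in> mcarrier E \<Longrightarrow> z \<in> mcarrier E \<Longrightarrow>
     madd E x (madd E y z) = madd E y (madd E x z)"
  and E_neg_distrib: "x \<in> mcarrier E \<Longrightarrow> y \<in> mcarrier E \<Longrightarrow> E_neg (madd E x y) = madd E (E_neg x) (E_neg y)"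
  and E_neg_zero: "E_neg (mzero E) = mzero E"
  using E_grp.inv_closed E_grp.r_inv E_grp.l_inv E_grp.r_one E_grp.m_lcomm E_grp.inv_mult E_grp.inv_one
  by simp_all

lemma E_neg_unique: "x \<in> mcarrier E \<Longrightarrow> y \<in> mcarrier E \<Longrightarrow> madd E x y = mzero E \<Longrightarrow> E_neg x = y"
  using E_grp.inv_equality[of y x] E_add_comm by simp

lemma E_idem_zero: "x \<in> mcarrier E \<Longrightarrow> madd E x x = x \<Longrightarrow> x = mzero E"
  using E_grp.r_cancel_one[of x x] by simp

lemma E_add_add_swap:
  "\<lbrakk>w \<in> mcarrier E; x \<in> mcarrier E; y \<in> mcarrier E; z \<in> mcarrier E\<rbrakk> \<Longrightarrow>
   madd E (madd E w x) (madd E y z) = madd E (madd E w y) (madd E x z)"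
  using E_add_assoc E_add_left_comm E_add_closed by metis

lemma E_act_zero: "x \<in> mcarrier E \<Longrightarrow> mact E x (\<lambda>_. 0) = mzero E"
  using E_act_add_right[OF _ zero_in_KQ zero_in_KQ, of x] E_act_closed[OF _ zero_in_KQ, of x]
  by (intro E_idem_zero) simp_all

lemma E_zero_act: "r \<in> KQ \<Longrightarrow> mact E (mzero E) r = mzero E"
  using E_act_add_left[OF E_zero_closed E_zero_closed] E_act_closed[OF E_zero_closed]
    E_axioms(5)[OF E_zero_closed]
  by (intro E_idem_zero) simp_all

lemma E_neg_act: "x \<in> mcarrier E \<Longrightarrow> r \<in> KQ \<Longrightarrow> mact E (E_neg x) r = E_neg (mact E x r)"
  using E_act_add_left[OF _ E_neg_closed] E_add_neg E_zero_act E_act_closed E_neg_closed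
  by (metis E_neg_unique)

lemma E_sum_closed: "(\<And>b. b \<in> B \<Longrightarrow> f b \<in> mcarrier E) \<Longrightarrow> E_sum f B \<in> mcarrier E"
  using E_grp.finprod_closed[of f B] by (auto simp: Pi_def)

lemma E_sum_act:
  "finite B \<Longrightarrow> (\<And>b. b \<in> B \<Longrightarrow> f b \<in> mcarrier E) \<Longrightarrow> r \<in> KQ \<Longrightarrow>
   mact E (E_sum f B) r = E_sum (\<lambda>b. mact E (f b) r) B"
proof (induction B rule: finite_induct)
  case (insert b B)
  then have "mact E (madd E (f b) (E_sum f B)) r = madd E (mact E (f b) r) (mact E (E_sum f B) r)"
    by (intro E_act_add_left E_sum_closed) auto
  with insert show ?case
    using E_act_closed by (simp add: E_grp.finprod_insert Pi_def)
qed (simp add: E_zero_act)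

lemma E_sum_mono_neutral:
  "finite B \<Longrightarrow> A \<subseteq> B \<Longrightarrow> (\<And>b. b \<in> B - A \<Longrightarrow> f b = mzero E) \<Longrightarrow> (\<And>b. b \<in> B \<Longrightarrow> f b \<in> mcarrier E) \<Longrightarrow>
   E_sum f A = E_sum f B"
  using E_grp.finprod_mono_neutral_cong_left[of B A f f] by (auto simp: Pi_def)

lemma E_sum_add:
  "(\<And>b. b \<in> B \<Longrightarrow> f b \<in> mcarrier E) \<Longrightarrow> (\<And>b. b \<in> B \<Longrightarrow> g b \<in> mcarrier E) \<Longrightarrow>
   E_sum (\<lambda>b. madd E (f b) (g b)) B = madd E (E_sum f B) (E_sum g B)"
  using E_grp.finprod_multf[of f B g] by (auto simp: Pi_def)

lemma E_sum_cong:
  "(\<And>b. b \<in> B \<Longrightarrow> f b = g b) \<Longrightarrow> (\<And>b. b \<in> B \<Longrightarrow> g b \<in> mcarrier E) \<Longrightarrow> E_sum f B = E_sum g B"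
  using E_grp.finprod_cong'[of B B g f] by (auto simp: Pi_def)

lemma E_sum_singleton: "f b \<in> mcarrier E \<Longrightarrow> E_sum f {b} = f b"
  by (simp add: E_grp.finprod_insert E_add_zero)

lemma E_sum_delta:
  assumes "finite B" "b \<in> B" "y \<in> mcarrier E"
  shows "E_sum (\<lambda>b'. if b' = b then y else mzero E) B = y"
proof -
  have "E_sum (\<lambda>b'. if b' = b then y else mzero E) B = E_sum (\<lambda>b'. if b' = b then y else mzero E) {b}"
    by (rule E_sum_mono_neutral[symmetric]) (use assms E_zero_closed in auto)
  with assms(3) show ?thesis by (simp add: E_sum_singleton E_add_zero)
qed

lemma i_in: "n \<in> KQ \<Longrightarrow> i n \<in> mcarrier E"
  and i_add: "n \<in> KQ \<Longrightarrow> n' \<in> KQ \<Longrightarrow> i (\<lambda>q. n q + n' q) = madd E (i n) (i n')"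
  and i_act: "n \<in> KQ \<Longrightarrow> r \<in> KQ \<Longrightarrow> i (path_alg_mult t n r) = mact E (i n) r"
  using i_hom unfolding mod_hom_def regular_module_simps path_ring_simps by blast+

lemma p_in: "x \<in> mcarrier E \<Longrightarrow> p x \<in> mcarrier GX"
  and p_add: "x \<in> mcarrier E \<Longrightarrow> y \<in> mcarrier E \<Longrightarrow> p (madd E x y) = (\<lambda>v. p x v + p y v)"
  and p_act: "x \<in> mcarrier E \<Longrightarrow> r \<in> KQ \<Longrightarrow> p (mact E x r) = mact GX (p x) r"
  using p_hom unfolding mod_hom_def GX_simps path_ring_simps by blast+

lemma p_zero: "p (mzero E) = (\<lambda>v. 0)"
proof -
  have "p (mzero E) = (\<lambda>v. p (mzero E) v + p (mzero E) v)"
    using p_add[OF E_zero_closed E_zero_closed] E_axioms(5)[OF E_zero_closed] by simp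
  then show ?thesis by (simp add: fun_eq_iff)
qed

lemma p_neg:
  assumes "x \<in> mcarrier E" shows "p (E_neg x) = (\<lambda>v. - p x v)"
proof -
  have "(\<lambda>v. p x v + p (E_neg x) v) = (\<lambda>v. 0)"
    using p_add[OF assms E_neg_closed[OF assms]] E_add_neg[OF assms] p_zero by simp
  then show ?thesis by (simp add: fun_eq_iff add_eq_0_iff)
qed

lemma p_i: "n \<in> KQ \<Longrightarrow> p (i n) = (\<lambda>v. 0)"
  using exact i_in by (auto simp: GX_simps)

lemma p_E_sum:
  "finite B \<Longrightarrow> (\<And>b. b \<in> B \<Longrightarrow> f b \<in> mcarrier E) \<Longrightarrow> p (E_sum f B) = (\<Sum>b\<in>B. p (f b))"
proof (induction B rule: finite_induct)
  case (insert b B)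
  then have "p (madd E (f b) (E_sum f B)) = p (f b) + p (E_sum f B)"
    by (subst p_add) (auto intro: E_sum_closed simp: plus_fun_def)
  with insert show ?case by (simp add: E_grp.finprod_insert Pi_def)
qed (simp add: p_zero zero_fun_def)

definition incl_inv :: "'e \<Rightarrow> 'v \<times> 'a list \<Rightarrow> 'k" where
  "incl_inv = the_inv_into KQ i"

lemma incl_inv_i: "n \<in> KQ \<Longrightarrow> incl_inv (i n) = n"
  unfolding incl_inv_def using the_inv_into_f_f[OF i_inj] .

lemma kernel_eq_i:
  assumes "x \<in> mcarrier E" "p x = (\<lambda>v. 0)"
  obtains n where "n \<in> KQ" "x = i n"
  using exact assms by (auto simp: GX_simps)

lemma incl_inv_in: "x \<in> mcarrier E \<Longrightarrow> p x = (\<lambda>v. 0) \<Longrightarrow> incl_inv x \<in> KQ"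
  and i_incl_inv: "x \<in> mcarrier E \<Longrightarrow> p x = (\<lambda>v. 0) \<Longrightarrow> i (incl_inv x) = x"
  by (auto elim: kernel_eq_i simp: incl_inv_i)

lemma incl_inv_add:
  assumes "x \<in> mcarrier E" "p x = (\<lambda>v. 0)" "y \<in> mcarrier E" "p y = (\<lambda>v. 0)"
  shows "incl_inv (madd E x y) = (\<lambda>q. incl_inv x q + incl_inv y q)"
proof -
  have "madd E x y = i (\<lambda>q. incl_inv x q + incl_inv y q)"
    using i_add[OF incl_inv_in[OF assms(1,2)] incl_inv_in[OF assms(3,4)]] i_incl_inv assms by simp
  then show ?thesis
    using incl_inv_i[OF add_in_KQ[OF incl_inv_in[OF assms(1,2)] incl_inv_in[OF assms(3,4)]]] by simp
qed

lemma incl_inv_act: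
  assumes "x \<in> mcarrier E" "p x = (\<lambda>v. 0)" "r \<in> KQ"
  shows "incl_inv (mact E x r) = path_alg_mult t (incl_inv x) r"
proof -
  have "mact E x r = i (path_alg_mult t (incl_inv x) r)"
    using i_act[OF incl_inv_in[OF assms(1,2)] assms(3)] i_incl_inv assms by simp
  then show ?thesis using incl_inv_i[OF mult_in_KQ[OF incl_inv_in[OF assms(1,2)] assms(3)]] by simp
qed

definition vbasis :: "'v \<Rightarrow> 'x set" where
  "vbasis v = (SOME B. B \<subseteq> V v \<and> vs.independent B \<and> V v \<subseteq> vs.span B)"

lemma vbasis: "vbasis v \<subseteq> V v" "vs.independent (vbasis v)" "V v \<subseteq> vs.span (vbasis v)"
proof -
  obtain B where "B \<subseteq> V v" "vs.independent B" "V v \<subseteq> vs.span B"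
    by (rule vs.basis_exists[of "V v"]) simp
  then have "\<exists>B. B \<subseteq> V v \<and> vs.independent B \<and> V v \<subseteq> vs.span B" by blast
  then have "vbasis v \<subseteq> V v \<and> vs.independent (vbasis v) \<and> V v \<subseteq> vs.span (vbasis v)"
    unfolding vbasis_def by (rule someI_ex)
  then show "vbasis v \<subseteq> V v" "vs.independent (vbasis v)" "V v \<subseteq> vs.span (vbasis v)" by auto
qed

definition coord :: "'v \<Rightarrow> 'x \<Rightarrow> 'x \<Rightarrow> 'k" where
  "coord v x = vs.representation (vbasis v) x"

lemma finite_coord: "finite {b. coord v x b \<noteq> 0}"
  unfolding coord_def by (rule vs.finite_representation)

lemma coord_nonzero_in_V: "coord v x b \<noteq> 0 \<Longrightarrow> b \<in> V v"
  unfolding coord_def using vs.representation_ne_zero vbasis(1) by blast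

lemma coord_add: "x \<in> V v \<Longrightarrow> y \<in> V v \<Longrightarrow> coord v (x + y) b = coord v x b + coord v y b"
  unfolding coord_def using vbasis by (simp add: vs.representation_add subset_iff)

lemma coord_scale: "x \<in> V v \<Longrightarrow> coord v (scale c x) b = c * coord v x b"
  unfolding coord_def using vbasis by (simp add: vs.representation_scale subset_iff)

lemma sum_coord: "x \<in> V v \<Longrightarrow> (\<Sum>b\<in>{b. coord v x b \<noteq> 0}. scale (coord v x b) b) = x"
  unfolding coord_def using vs.sum_nonzero_representation_eq[of "vbasis v" x] vbasis(2,3)[of v] by auto

lemma at_vertex_in_GX: "v \<in> Q0 \<Longrightarrow> x \<in> V v \<Longrightarrow> at_vertex v x \<in> mcarrier GX"
proof -
  assume "v \<in> Q0" "x \<in> V v"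
  moreover have "{w. at_vertex v x w \<noteq> 0} \<subseteq> {v}" by (auto simp: at_vertex_def)
  then have "finite {w. at_vertex v x w \<noteq> 0}" by (rule finite_subset) simp
  ultimately show ?thesis by (auto simp: GX_carrier_iff at_vertex_def zero_in_V)
qed

definition lift :: "'v \<Rightarrow> 'x \<Rightarrow> 'e" where
  "lift v b = (SOME e. e \<in> mcarrier E \<and> p e = at_vertex v b)"

lemma lift: "v \<in> Q0 \<Longrightarrow> b \<in> V v \<Longrightarrow> lift v b \<in> mcarrier E \<and> p (lift v b) = at_vertex v b"
proof -
  assume "v \<in> Q0" "b \<in> V v"
  then have "at_vertex v b \<in> p ` mcarrier E" using p_surj at_vertex_in_GX by simp
  then have "\<exists>e. e \<in> mcarrier E \<and> p e = at_vertex v b" by auto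
  then show ?thesis unfolding lift_def by (rule someI_ex)
qed

definition lift_scaled :: "'v \<Rightarrow> 'k \<Rightarrow> 'x \<Rightarrow> 'e" where
  "lift_scaled v c b = mact E (lift v b) (path_monom c (v, []))"

lemma lift_scaled_in: "v \<in> Q0 \<Longrightarrow> b \<in> V v \<Longrightarrow> lift_scaled v c b \<in> mcarrier E"
  unfolding lift_scaled_def using lift E_act_closed vertex_monom_in_KQ by blast

lemma lift_scaled_zero: "v \<in> Q0 \<Longrightarrow> b \<in> V v \<Longrightarrow> lift_scaled v 0 b = mzero E"
  unfolding lift_scaled_def using lift E_act_zero by simp

lemma lift_scaled_add: "v \<in> Q0 \<Longrightarrow> b \<in> V v \<Longrightarrow> lift_scaled v (c + d) b = madd E (lift_scaled v c b) (lift_scaled v d b)"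
  unfolding lift_scaled_def path_monom_add using E_act_add_right lift vertex_monom_in_KQ by blast

lemma lift_scaled_act:
  "v \<in> Q0 \<Longrightarrow> b \<in> V v \<Longrightarrow> mact E (lift_scaled v d b) (path_monom c (v, [])) = lift_scaled v (c * d) b"
  unfolding lift_scaled_def using E_act_act[OF conjunct1[OF lift] vertex_monom_in_KQ vertex_monom_in_KQ]
  by (simp add: path_alg_mult_monom_monom mult.commute)

lemma p_lift_scaled: "v \<in> Q0 \<Longrightarrow> b \<in> V v \<Longrightarrow> p (lift_scaled v c b) = at_vertex v (scale c b)"
  unfolding lift_scaled_def using p_act[OF conjunct1[OF lift] vertex_monom_in_KQ] lift
  by (simp add: G_act_monom at_vertex_def fun_eq_iff)

definition lin_section :: "'v \<Rightarrow> 'x \<Rightarrow> 'e" where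
  "lin_section v x = E_sum (\<lambda>b. lift_scaled v (coord v x b) b) {b. coord v x b \<noteq> 0}"

lemma lin_section_in: "v \<in> Q0 \<Longrightarrow> lin_section v x \<in> mcarrier E"
  unfolding lin_section_def using lift_scaled_in coord_nonzero_in_V by (intro E_sum_closed) auto

lemma lin_section_superset:
  "v \<in> Q0 \<Longrightarrow> finite B \<Longrightarrow> {b. coord v x b \<noteq> 0} \<subseteq> B \<Longrightarrow> B \<subseteq> V v \<Longrightarrow>
   lin_section v x = E_sum (\<lambda>b. lift_scaled v (coord v x b) b) B"
  unfolding lin_section_def by (rule E_sum_mono_neutral) (auto simp: lift_scaled_zero intro: lift_scaled_in)

lemma p_lin_section:
  assumes v: "v \<in> Q0" and x: "x \<in> V v"
  shows "p (lin_section v x) = at_vertex v x"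
proof -
  have "p (lin_section v x) = (\<Sum>b\<in>{b. coord v x b \<noteq> 0}. at_vertex v (scale (coord v x b) b))"
    unfolding lin_section_def using finite_coord lift_scaled_in coord_nonzero_in_V p_lift_scaled v
    by (subst p_E_sum) auto
  also have "\<dots> = at_vertex v (\<Sum>b\<in>{b. coord v x b \<noteq> 0}. scale (coord v x b) b)"
    by (auto simp: at_vertex_def fun_eq_iff sum_fun_apply intro!: sum.neutral)
  finally show ?thesis using sum_coord[OF x] by simp
qed

lemma lin_section_add:
  assumes v: "v \<in> Q0" and x: "x \<in> V v" and y: "y \<in> V v"
  shows "lin_section v (x + y) = madd E (lin_section v x) (lin_section v y)"
proof -
  define B where "B = {b. coord v x b \<noteq> 0} \<union> {b. coord v y b \<noteq> 0}"
  have B: "finite B" "B \<subseteq> V v" using finite_coord coord_nonzero_in_V by (auto simp: B_def)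
  have "lin_section v (x + y) = E_sum (\<lambda>b. lift_scaled v (coord v (x + y) b) b) B"
    using coord_add[OF x y] by (intro lin_section_superset[OF v B(1) _ B(2)]) (auto simp: B_def)
  also have "\<dots> = E_sum (\<lambda>b. madd E (lift_scaled v (coord v x b) b) (lift_scaled v (coord v y b) b)) B"
    using B(2) coord_add[OF x y] lift_scaled_add[OF v] lift_scaled_in[OF v]
    by (intro E_sum_cong) (auto intro!: E_add_closed)
  also have "\<dots> = madd E (lin_section v x) (lin_section v y)"
    using B lift_scaled_in[OF v] lin_section_superset[OF v B(1) _ B(2)]
    by (subst E_sum_add) (auto simp: B_def)
  finally show ?thesis .
qed

lemma lin_section_scale:
  assumes v: "v \<in> Q0" and x: "x \<in> V v"
  shows "lin_section v (scale c x) = mact E (lin_section v x) (path_monom c (v, []))"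
proof -
  define B where "B = {b. coord v x b \<noteq> 0}"
  have B: "finite B" "B \<subseteq> V v" using finite_coord coord_nonzero_in_V by (auto simp: B_def)
  have "lin_section v (scale c x) = E_sum (\<lambda>b. lift_scaled v (coord v (scale c x) b) b) B"
    using coord_scale[OF x] by (intro lin_section_superset[OF v B(1) _ B(2)]) (auto simp: B_def)
  also have "\<dots> = E_sum (\<lambda>b. mact E (lift_scaled v (coord v x b) b) (path_monom c (v, []))) B"
    using B(2) coord_scale[OF x] lift_scaled_act[OF v] lift_scaled_in[OF v] vertex_monom_in_KQ[OF v]
    by (intro E_sum_cong) (auto intro!: E_act_closed)
  also have "\<dots> = mact E (lin_section v x) (path_monom c (v, []))"
    unfolding lin_section_def B_def[symmetric]
    using B lift_scaled_in[OF v] vertex_monom_in_KQ[OF v] by (subst E_sum_act) auto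
  finally show ?thesis .
qed

text \<open>The failure of \<open>lin_section\<close> to commute with an arrow lies in the kernel, i.e. in \<open>i(KQ)\<close>,
  and defines an arrow cochain.\<close>

definition section_defect :: "'a \<Rightarrow> 'x \<Rightarrow> 'e" where
  "section_defect a x =
    madd E (mact E (lin_section (s a) x) (path_monom 1 (s a, [a]))) (E_neg (lin_section (t a) (X a x)))"

lemma section_defect_in: "a \<in> Q1 \<Longrightarrow> section_defect a x \<in> mcarrier E"
  unfolding section_defect_def
  using lin_section_in src_in_verts tgt_in_verts E_act_closed arrow_monom_in_KQ E_neg_closed E_add_closed
  by metis

lemma p_section_defect:
  assumes a: "a \<in> Q1" and x: "x \<in> V (s a)"
  shows "p (section_defect a x) = (\<lambda>v. 0)"
proof -
  note in_E = lin_section_in[OF src_in_verts[OF a]] lin_section_in[OF tgt_in_verts[OF a]]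
  have "mact GX (at_vertex (s a) x) (path_monom 1 (s a, [a])) = at_vertex (t a) (X a x)"
    by (auto simp: G_act_monom at_vertex_def fun_eq_iff path_tgt_def eval_path_def)
  then show ?thesis
    unfolding section_defect_def
    using p_add[OF E_act_closed[OF in_E(1) arrow_monom_in_KQ[OF a]] E_neg_closed[OF in_E(2)]]
      p_act[OF in_E(1) arrow_monom_in_KQ[OF a]] p_neg[OF in_E(2)]
      p_lin_section[OF src_in_verts[OF a] x] p_lin_section[OF tgt_in_verts[OF a] arrow_map_in[OF a x]]
    by simp
qed

lemma section_defect_add:
  assumes a: "a \<in> Q1" and x: "x \<in> V (s a)" and y: "y \<in> V (s a)"
  shows "section_defect a (x + y) = madd E (section_defect a x) (section_defect a y)"
proof -
  note sa = src_in_verts[OF a] and ta = tgt_in_verts[OF a]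
  have Xxy: "X a x \<in> V (t a)" "X a y \<in> V (t a)" using arrow_map_in[OF a] x y by auto
  have "section_defect a (x + y) =
    madd E (madd E (mact E (lin_section (s a) x) (path_monom 1 (s a, [a])))
                   (mact E (lin_section (s a) y) (path_monom 1 (s a, [a]))))
           (madd E (E_neg (lin_section (t a) (X a x))) (E_neg (lin_section (t a) (X a y))))"
    unfolding section_defect_def lin_section_add[OF sa x y] arrow_map_add[OF a x y] lin_section_add[OF ta Xxy]
    using E_act_add_left E_neg_distrib lin_section_in sa ta arrow_monom_in_KQ[OF a] by simp
  also have "\<dots> = madd E (section_defect a x) (section_defect a y)"
    unfolding section_defect_def
    using E_add_add_swap E_act_closed lin_section_in sa ta arrow_monom_in_KQ[OF a] E_neg_closed by metis
  finally show ?thesis .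
qed

lemma section_defect_scale:
  assumes a: "a \<in> Q1" and x: "x \<in> V (s a)"
  shows "section_defect a (scale c x) = mact E (section_defect a x) (path_monom c (t a, []))"
proof -
  note sa = src_in_verts[OF a] and ta = tgt_in_verts[OF a]
  note in_E = lin_section_in[OF sa, of x] lin_section_in[OF ta, of "X a x"]
  have "mact E (lin_section (s a) (scale c x)) (path_monom 1 (s a, [a])) =
    mact E (mact E (lin_section (s a) x) (path_monom 1 (s a, [a]))) (path_monom c (t a, []))"
    unfolding lin_section_scale[OF sa x]
    using E_act_act[OF in_E(1) vertex_monom_in_KQ[OF sa] arrow_monom_in_KQ[OF a]]
      E_act_act[OF in_E(1) arrow_monom_in_KQ[OF a] vertex_monom_in_KQ[OF ta]]
    by (simp add: path_alg_mult_monom_monom path_tgt_def)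
  moreover have "E_neg (lin_section (t a) (X a (scale c x))) =
    mact E (E_neg (lin_section (t a) (X a x))) (path_monom c (t a, []))"
    unfolding arrow_map_scale[OF a x] lin_section_scale[OF ta arrow_map_in[OF a x]]
    using E_neg_act[OF in_E(2) vertex_monom_in_KQ[OF ta]] by simp
  ultimately show ?thesis
    unfolding section_defect_def
    using E_act_add_left[OF E_act_closed[OF in_E(1) arrow_monom_in_KQ[OF a]] E_neg_closed[OF in_E(2)]
        vertex_monom_in_KQ[OF ta]]
    by simp
qed

definition defect_cochain :: "'a \<Rightarrow> 'x \<Rightarrow> 'v \<times> 'a list \<Rightarrow> 'k" where
  "defect_cochain a x = incl_inv (section_defect a x)"

lemma defect_cochain_in: "a \<in> Q1 \<Longrightarrow> x \<in> V (s a) \<Longrightarrow> defect_cochain a x \<in> KQ"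
  and i_defect_cochain: "a \<in> Q1 \<Longrightarrow> x \<in> V (s a) \<Longrightarrow> i (defect_cochain a x) = section_defect a x"
  unfolding defect_cochain_def using incl_inv_in i_incl_inv section_defect_in p_section_defect by blast+

lemma arrow_cochain_defect: "arrow_cochain Q0 Q1 s t scale V defect_cochain"
  unfolding arrow_cochain_def
proof (intro ballI conjI allI impI)
  fix a x assume a: "a \<in> Q1" and x: "x \<in> V (s a)"
  show in_KQ: "defect_cochain a x \<in> path_alg_carrier Q0 Q1 s t" by (rule defect_cochain_in[OF a x])
  have scale_eq: "defect_cochain a (scale c x) = (\<lambda>q. if path_tgt t q = t a then defect_cochain a x q * c else 0)"
    for c
    unfolding defect_cochain_def section_defect_scale[OF a x]
    using incl_inv_act[OF section_defect_in[OF a] p_section_defect[OF a x] vertex_monom_in_KQ[OF tgt_in_verts[OF a]]]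
      path_alg_mult_monom_trivial[OF finite_supp_KQ[OF in_KQ[unfolded defect_cochain_def]]]
    by simp
  show tgt: "path_tgt t q = t a" if "defect_cochain a x q \<noteq> 0" for q
    using that fun_cong[OF scale_eq[of 1], of q] by (auto split: if_splits)
  show "defect_cochain a (scale c x) = (\<lambda>q. c * defect_cochain a x q)" for c
    using scale_eq tgt by (auto simp: fun_eq_iff)
  show "defect_cochain a (x + y) = (\<lambda>q. defect_cochain a x q + defect_cochain a y q)" if y: "y \<in> V (s a)" for y
    unfolding defect_cochain_def section_defect_add[OF a x y]
    using incl_inv_add[OF section_defect_in[OF a] p_section_defect[OF a x]
        section_defect_in[OF a] p_section_defect[OF a y]] .
qed

context
  fixes f :: "'v \<Rightarrow> 'x \<Rightarrow> 'v \<times> 'a list \<Rightarrow> 'k"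
  assumes f_cochain: "vertex_cochain Q0 Q1 s t scale V f"
    and f_bounds: "\<And>a x. a \<in> Q1 \<Longrightarrow> x \<in> V (s a) \<Longrightarrow> defect_cochain a x = coboundary s t X f a x"
begin

definition corrected_section :: "'v \<Rightarrow> 'x \<Rightarrow> 'e" where
  "corrected_section v x = madd E (lin_section v x) (i (\<lambda>q. - f v x q))"

lemma f_in: "v \<in> Q0 \<Longrightarrow> x \<in> V v \<Longrightarrow> f v x \<in> KQ"
  using vertex_cochainD(1)[OF f_cochain] by (simp add: KQe_def)

lemma corrected_section_in: "v \<in> Q0 \<Longrightarrow> x \<in> V v \<Longrightarrow> corrected_section v x \<in> mcarrier E"
  unfolding corrected_section_def using lin_section_in i_in uminus_in_KQ f_in E_add_closed by metis

lemma p_corrected_section: "v \<in> Q0 \<Longrightarrow> x \<in> V v \<Longrightarrow> p (corrected_section v x) = at_vertex v x"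
  unfolding corrected_section_def
  using p_add[OF lin_section_in i_in[OF uminus_in_KQ[OF f_in]]] p_lin_section p_i[OF uminus_in_KQ[OF f_in]]
  by simp

lemma corrected_section_add:
  assumes v: "v \<in> Q0" and x: "x \<in> V v" and y: "y \<in> V v"
  shows "corrected_section v (x + y) = madd E (corrected_section v x) (corrected_section v y)"
proof -
  have "i (\<lambda>q. - f v (x + y) q) = madd E (i (\<lambda>q. - f v x q)) (i (\<lambda>q. - f v y q))"
    using i_add[OF uminus_in_KQ[OF f_in[OF v x]] uminus_in_KQ[OF f_in[OF v y]]]
      vertex_cochainD(2)[OF f_cochain v x y]
    by (simp add: algebra_simps)
  then show ?thesis
    unfolding corrected_section_def lin_section_add[OF v x y]
    using E_add_add_swap lin_section_in[OF v] i_in uminus_in_KQ f_in v x y by metis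
qed

lemma corrected_section_scale:
  assumes v: "v \<in> Q0" and x: "x \<in> V v"
  shows "corrected_section v (scale c x) = mact E (corrected_section v x) (path_monom c (v, []))"
proof -
  have "path_alg_mult t (\<lambda>q. - f v x q) (path_monom c (v, [])) = (\<lambda>q. - f v (scale c x) q)"
    using vertex_cochainD(1,3)[OF f_cochain v x]
    by (auto simp: path_alg_mult_monom_trivial KQe_def finite_supp_KQ fun_eq_iff)
  then have "i (\<lambda>q. - f v (scale c x) q) = mact E (i (\<lambda>q. - f v x q)) (path_monom c (v, []))"
    using i_act[OF uminus_in_KQ[OF f_in[OF v x]] vertex_monom_in_KQ[OF v, where c=c]] by simp
  then show ?thesis
    unfolding corrected_section_def
    using E_act_add_left[OF lin_section_in[OF v] i_in[OF uminus_in_KQ[OF f_in[OF v x]]] vertex_monom_in_KQ[OF v]]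
      lin_section_scale[OF v x]
    by simp
qed

lemma corrected_section_unit: "v \<in> Q0 \<Longrightarrow> x \<in> V v \<Longrightarrow> mact E (corrected_section v x) (path_monom 1 (v, [])) = corrected_section v x"
  using corrected_section_scale[of v x 1] by simp

lemma corrected_section_zero: "v \<in> Q0 \<Longrightarrow> corrected_section v 0 = mzero E"
  using corrected_section_scale[OF _ zero_in_V, of v 0] corrected_section_in[OF _ zero_in_V, of v] E_act_zero
  by simp

lemma corrected_section_arrow:
  assumes a: "a \<in> Q1" and x: "x \<in> V (s a)"
  shows "mact E (corrected_section (s a) x) (path_monom 1 (s a, [a])) = corrected_section (t a) (X a x)"
proof -
  note sa = src_in_verts[OF a] and ta = tgt_in_verts[OF a]
  define A where "A = path_monom (1 :: 'k) (s a, [a])"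
  define S1 where "S1 = lin_section (s a) x"
  define S2 where "S2 = lin_section (t a) (X a x)"
  define F1 where "F1 = f (s a) x"
  define F2 where "F2 = f (t a) (X a x)"
  have A: "A \<in> KQ" unfolding A_def by (rule arrow_monom_in_KQ[OF a])
  have S: "S1 \<in> mcarrier E" "S2 \<in> mcarrier E" unfolding S1_def S2_def using lin_section_in sa ta by auto
  have F: "F1 \<in> KQ" "F2 \<in> KQ" unfolding F1_def F2_def using f_in sa ta x arrow_map_in[OF a x] by auto
  have F1A: "path_alg_mult t F1 A \<in> KQ" using mult_in_KQ[OF F(1) A] .
  have S1A: "mact E S1 A = madd E (i (defect_cochain a x)) S2"
  proof -
    have "madd E (i (defect_cochain a x)) S2 = madd E (madd E (mact E S1 A) (E_neg S2)) S2"
      using i_defect_cochain[OF a x] unfolding section_defect_def S1_def S2_def A_def by simp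
    also have "\<dots> = mact E S1 A"
      using E_add_assoc[OF E_act_closed[OF S(1) A] E_neg_closed[OF S(2)] S(2)] E_neg_add[OF S(2)]
        E_add_zero[OF E_act_closed[OF S(1) A]] by simp
    finally show ?thesis by simp
  qed
  have cob: "(\<lambda>q. defect_cochain a x q + - path_alg_mult t F1 A q) = (\<lambda>q. - F2 q)"
    using f_bounds[OF a x] unfolding coboundary_def F1_def F2_def A_def by (simp add: fun_eq_iff)
  have "mact E (corrected_section (s a) x) A = madd E (mact E S1 A) (i (path_alg_mult t (\<lambda>q. - F1 q) A))"
    unfolding corrected_section_def S1_def[symmetric] F1_def[symmetric]
    using E_act_add_left[OF S(1) i_in[OF uminus_in_KQ[OF F(1)]] A] i_act[OF uminus_in_KQ[OF F(1)] A] by simp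
  also have "path_alg_mult t (\<lambda>q. - F1 q) A = (\<lambda>q. - path_alg_mult t F1 A q)"
    using path_alg_mult_scale_left[of F1 A t "-1"] finite_supp_KQ[OF F(1)] finite_supp_KQ[OF A] by simp
  also have "madd E (mact E S1 A) (i (\<lambda>q. - path_alg_mult t F1 A q)) =
    madd E S2 (madd E (i (defect_cochain a x)) (i (\<lambda>q. - path_alg_mult t F1 A q)))"
    unfolding S1A using E_add_assoc E_add_comm E_add_left_comm i_in defect_cochain_in[OF a x] S(2)
      uminus_in_KQ[OF F1A] by metis
  also have "\<dots> = madd E S2 (i (\<lambda>q. - F2 q))"
    using i_add[OF defect_cochain_in[OF a x] uminus_in_KQ[OF F1A]] cob by simp
  also have "\<dots> = corrected_section (t a) (X a x)" unfolding corrected_section_def S2_def F2_def ..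
  finally show ?thesis unfolding A_def .
qed

lemma corrected_section_path:
  "is_path Q0 Q1 s t (v, as) \<Longrightarrow> x \<in> V v \<Longrightarrow>
   mact E (corrected_section v x) (path_monom 1 (v, as)) = corrected_section (path_tgt t (v, as)) (eval_path X (v, as) x)"
proof (induction as arbitrary: v x)
  case Nil
  then show ?case using corrected_section_unit by (simp add: is_path_Nil)
next
  case (Cons a as)
  from Cons.prems(1) have a: "a \<in> Q1" "s a = v" "is_path Q0 Q1 s t (t a, as)"
    by (auto simp: is_path_Cons[OF quiver])
  have x: "x \<in> V (s a)" using Cons.prems(2) a(2) by simp
  have "path_alg_mult t (path_monom 1 (s a, [a])) (path_monom 1 (t a, as)) = path_monom (1::'k) (v, a # as)"
    using a(2) by (simp add: path_alg_mult_monom_monom path_tgt_def)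
  then have "mact E (corrected_section v x) (path_monom 1 (v, a # as)) =
    mact E (mact E (corrected_section (s a) x) (path_monom 1 (s a, [a]))) (path_monom 1 (t a, as))"
    using E_act_act[OF corrected_section_in[OF src_in_verts[OF a(1)] x] arrow_monom_in_KQ[OF a(1)]
        monom_in_KQ[OF a(3)]] a(2)
    by simp
  also have "\<dots> = corrected_section (path_tgt t (t a, as)) (eval_path X (t a, as) (X a x))"
    using corrected_section_arrow[OF a(1) x] Cons.IH[OF a(3) arrow_map_in[OF a(1) x]] by simp
  finally show ?case by (simp add: path_tgt_Cons eval_path_Cons[where w="t a"])
qed

lemma corrected_section_monom:
  assumes r: "is_path Q0 Q1 s t r" and v: "v \<in> Q0" and x: "x \<in> V v"
  shows "mact E (corrected_section v x) (path_monom c r) =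
    (if fst r = v then corrected_section (path_tgt t r) (scale c (eval_path X r x)) else mzero E)"
proof (cases "fst r = v")
  case True
  have tgt: "path_tgt t r \<in> Q0" using path_tgt_in_verts[OF quiver r] .
  have "mact E (corrected_section v x) (path_monom c r) =
    mact E (mact E (corrected_section v x) (path_monom 1 r)) (path_monom c (path_tgt t r, []))"
    using E_act_act[OF corrected_section_in[OF v x] monom_in_KQ[OF r] vertex_monom_in_KQ[OF tgt]]
    by (simp add: path_alg_mult_monom_monom)
  also have "mact E (corrected_section v x) (path_monom 1 r) = corrected_section (path_tgt t r) (eval_path X r x)"
    using corrected_section_path[of v "snd r" x] r x True by (metis prod.collapse)
  finally show ?thesis
    using corrected_section_scale[OF tgt eval_path_in[OF r]] x True by simp
next
  case False
  have "mact E (corrected_section v x) (path_monom c r) =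
    mact E (mact E (corrected_section v x) (path_monom 1 (v, []))) (path_monom c r)"
    using corrected_section_unit[OF v x] by simp
  also have "\<dots> = mzero E"
    using E_act_act[OF corrected_section_in[OF v x] vertex_monom_in_KQ[OF v] monom_in_KQ[OF r]] False
      E_act_zero[OF corrected_section_in[OF v x]]
    by (simp add: path_alg_mult_monom_monom)
  finally show ?thesis using False by simp
qed

definition module_section :: "('v \<Rightarrow> 'x) \<Rightarrow> 'e" where
  "module_section m = E_sum (\<lambda>v. corrected_section v (m v)) {v. m v \<noteq> 0}"

lemma GX_finite: "m \<in> mcarrier GX \<Longrightarrow> finite {v. m v \<noteq> 0}"
  and GX_verts: "m \<in> mcarrier GX \<Longrightarrow> m v \<noteq> 0 \<Longrightarrow> v \<in> Q0"
  and GX_in_V: "m \<in> mcarrier GX \<Longrightarrow> v \<in> Q0 \<Longrightarrow> m v \<in> V v"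
  by (auto simp: GX_carrier_iff)

lemma module_section_superset:
  "m \<in> mcarrier GX \<Longrightarrow> finite B \<Longrightarrow> {v. m v \<noteq> 0} \<subseteq> B \<Longrightarrow> B \<subseteq> Q0 \<Longrightarrow>
   module_section m = E_sum (\<lambda>v. corrected_section v (m v)) B"
  unfolding module_section_def
  by (rule E_sum_mono_neutral) (auto simp: corrected_section_zero intro: corrected_section_in GX_in_V)

lemma module_section_in: "m \<in> mcarrier GX \<Longrightarrow> module_section m \<in> mcarrier E"
  unfolding module_section_def using corrected_section_in GX_in_V GX_verts by (intro E_sum_closed) auto

lemma p_module_section:
  assumes m: "m \<in> mcarrier GX"
  shows "p (module_section m) = m"
proof -
  have "p (module_section m) = (\<Sum>v\<in>{v. m v \<noteq> 0}. at_vertex v (m v))"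
    unfolding module_section_def
    using GX_finite[OF m] corrected_section_in GX_in_V[OF m] GX_verts[OF m] p_corrected_section
    by (subst p_E_sum) (auto intro: sum.cong)
  also have "\<dots> = m"
    using GX_finite[OF m] by (auto simp: fun_eq_iff sum_fun_apply at_vertex_def sum.delta')
  finally show ?thesis .
qed

lemma module_section_add:
  assumes m: "m \<in> mcarrier GX" and m': "m' \<in> mcarrier GX"
  shows "module_section (\<lambda>v. m v + m' v) = madd E (module_section m) (module_section m')"
proof -
  define B where "B = {v. m v \<noteq> 0} \<union> {v. m' v \<noteq> 0}"
  have B: "finite B" "B \<subseteq> Q0" using GX_finite GX_verts m m' by (auto simp: B_def)
  have "(\<lambda>v. m v + m' v) \<in> mcarrier GX" using rmodule_GX m m' unfolding rmodule_def GX_simps by blast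
  then have "module_section (\<lambda>v. m v + m' v) = E_sum (\<lambda>v. corrected_section v (m v + m' v)) B"
    by (rule module_section_superset[OF _ B(1) _ B(2)]) (auto simp: B_def)
  also have "\<dots> = E_sum (\<lambda>v. madd E (corrected_section v (m v)) (corrected_section v (m' v))) B"
    using corrected_section_add GX_in_V m m' B(2) corrected_section_in by (intro E_sum_cong) (auto intro!: E_add_closed)
  also have "\<dots> = madd E (module_section m) (module_section m')"
    using corrected_section_in GX_in_V m m' B module_section_superset[OF _ B(1) _ B(2)]
    by (subst E_sum_add) (auto simp: B_def)
  finally show ?thesis .
qed

lemma module_section_zero: "module_section (\<lambda>v. 0) = mzero E"
  unfolding module_section_def by simp

lemma module_section_at_vertex:
  assumes "v \<in> Q0" "x \<in> V v"
  shows "module_section (at_vertex v x) = corrected_section v x"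
proof -
  have "module_section (at_vertex v x) = E_sum (\<lambda>w. corrected_section w (at_vertex v x w)) {v}"
    by (rule module_section_superset[OF at_vertex_in_GX[OF assms]]) (auto simp: at_vertex_def assms(1))
  then show ?thesis using corrected_section_in[OF assms] by (simp add: E_sum_singleton E_add_zero at_vertex_def)
qed

lemma module_section_act_monom:
  assumes m: "m \<in> mcarrier GX" and r: "is_path Q0 Q1 s t r"
  shows "module_section (mact GX m (path_monom c r)) = mact E (module_section m) (path_monom c r)"
proof -
  have src: "fst r \<in> Q0" and tgt: "path_tgt t r \<in> Q0"
    using is_path_fst[OF r] path_tgt_in_verts[OF quiver r] .
  define y where "y = scale c (eval_path X r (m (fst r)))"
  have y: "y \<in> V (path_tgt t r)"
    unfolding y_def using vs.subspace_scale[OF subspace_V[OF tgt] eval_path_in[OF r GX_in_V[OF m src]]] .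
  define B where "B = insert (fst r) {v. m v \<noteq> 0}"
  have B: "finite B" "B \<subseteq> Q0" using GX_finite[OF m] GX_verts[OF m] src by (auto simp: B_def)
  have "module_section (mact GX m (path_monom c r)) = corrected_section (path_tgt t r) y"
    using module_section_at_vertex[OF tgt y] by (simp add: G_act_monom y_def)
  also have "\<dots> = E_sum (\<lambda>v. if v = fst r then corrected_section (path_tgt t r) y else mzero E) B"
    using E_sum_delta[OF B(1) _ corrected_section_in[OF tgt y]] by (simp add: B_def)
  also have "\<dots> = E_sum (\<lambda>v. mact E (corrected_section v (m v)) (path_monom c r)) B"
    using corrected_section_monom[OF r] GX_in_V[OF m] B(2)
    by (intro E_sum_cong) (auto simp: y_def intro!: E_act_closed corrected_section_in monom_in_KQ[OF r])
  also have "\<dots> = mact E (E_sum (\<lambda>v. corrected_section v (m v)) B) (path_monom c r)"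
    using corrected_section_in GX_in_V[OF m] B monom_in_KQ[OF r] by (subst E_sum_act) auto
  also have "\<dots> = mact E (module_section m) (path_monom c r)"
    by (subst module_section_superset[OF m B(1) _ B(2)]) (auto simp: B_def)
  finally show ?thesis .
qed

lemma module_section_act_supp_subset:
  assumes m: "m \<in> mcarrier GX"
  shows "finite A \<Longrightarrow> r \<in> KQ \<Longrightarrow> {q. r q \<noteq> 0} \<subseteq> A \<Longrightarrow>
    module_section (mact GX m r) = mact E (module_section m) r"
proof (induction A arbitrary: r rule: finite_induct)
  case empty
  then have "r = (\<lambda>_. 0)" by auto
  then show ?case
    using E_act_zero[OF module_section_in[OF m]] module_section_zero by (simp add: G_act_eq_sum)
next
  case (insert q A)
  define r' where "r' = r(q := 0)"
  have r': "r' \<in> KQ" "{q. r' q \<noteq> 0} \<subseteq> A"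
    using insert.prems by (auto simp: r'_def intro!: KQ_subset_closed[of r] split: if_splits)
  show ?case
  proof (cases "r q = 0")
    case True
    then have "r = r'" by (auto simp: r'_def)
    then show ?thesis using insert.IH[OF r'] by simp
  next
    case False
    have q: "is_path Q0 Q1 s t q" using is_path_supp_KQ[OF insert.prems(1) False] .
    have r_eq: "r = (\<lambda>q'. r' q' + path_monom (r q) q q')" by (auto simp: r'_def path_monom_def)
    have "module_section (mact GX m r) =
        madd E (module_section (mact GX m r')) (module_section (mact GX m (path_monom (r q) q)))"
      by (subst r_eq, subst G_act_add_right[OF r'(1) monom_in_KQ[OF q]])
        (simp add: module_section_add G_act_in_carrier[OF m] r'(1) monom_in_KQ[OF q])
    also have "\<dots> = madd E (mact E (module_section m) r') (mact E (module_section m) (path_monom (r q) q))"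
      using insert.IH[OF r'] module_section_act_monom[OF m q] by simp
    also have "\<dots> = mact E (module_section m) r"
      using E_act_add_right[OF module_section_in[OF m] r'(1) monom_in_KQ[OF q, where c="r q"]]
      by (simp flip: r_eq)
    finally show ?thesis .
  qed
qed

lemma module_section_act:
  "m \<in> mcarrier GX \<Longrightarrow> r \<in> KQ \<Longrightarrow> module_section (mact GX m r) = mact E (module_section m) r"
  using module_section_act_supp_subset finite_supp_KQ by blast

definition retraction :: "'e \<Rightarrow> 'v \<times> 'a list \<Rightarrow> 'k" where
  "retraction x = incl_inv (madd E x (E_neg (module_section (p x))))"

lemma kernel_part:
  assumes "x \<in> mcarrier E"
  shows "madd E x (E_neg (module_section (p x))) \<in> mcarrier E"
    "p (madd E x (E_neg (module_section (p x)))) = (\<lambda>v. 0)"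
  using assms E_add_closed E_neg_closed module_section_in p_in
    p_add[OF assms E_neg_closed[OF module_section_in[OF p_in[OF assms]]]]
    p_neg[OF module_section_in[OF p_in[OF assms]]] p_module_section[OF p_in[OF assms]]
  by auto

lemma retraction_hom: "mod_hom KQ_ring E (regular_module Q0 Q1 s t) retraction"
  unfolding mod_hom_def regular_module_simps path_ring_simps
proof (intro conjI ballI)
  fix x assume x: "x \<in> mcarrier E"
  show "retraction x \<in> KQ" unfolding retraction_def using incl_inv_in kernel_part[OF x] by blast
next
  fix x y assume x: "x \<in> mcarrier E" and y: "y \<in> mcarrier E"
  have sx: "module_section (p x) \<in> mcarrier E" and sy: "module_section (p y) \<in> mcarrier E"
    using module_section_in p_in x y by auto
  have "madd E (madd E x y) (E_neg (module_section (p (madd E x y)))) =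
    madd E (madd E x y) (E_neg (madd E (module_section (p x)) (module_section (p y))))"
    unfolding p_add[OF x y] module_section_add[OF p_in[OF x] p_in[OF y]] ..
  also have "\<dots> = madd E (madd E x (E_neg (module_section (p x)))) (madd E y (E_neg (module_section (p y))))"
    unfolding E_neg_distrib[OF sx sy] using E_add_add_swap x y E_neg_closed sx sy by metis
  finally show "retraction (madd E x y) = (\<lambda>q. retraction x q + retraction y q)"
    unfolding retraction_def using incl_inv_add[OF kernel_part[OF x] kernel_part[OF y]] by simp
next
  fix x r assume x: "x \<in> mcarrier E" and r: "r \<in> KQ"
  have sx: "module_section (p x) \<in> mcarrier E" using module_section_in p_in x by auto
  have "madd E (mact E x r) (E_neg (module_section (p (mact E x r)))) =
    mact E (madd E x (E_neg (module_section (p x)))) r"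
    unfolding p_act[OF x r] module_section_act[OF p_in[OF x] r]
    using E_act_add_left[OF x E_neg_closed[OF sx] r] E_neg_act[OF sx r] by simp
  then show "retraction (mact E x r) = path_alg_mult t (retraction x) r"
    unfolding retraction_def using incl_inv_act[OF kernel_part[OF x] r] by simp
qed

lemma retraction_i: "n \<in> KQ \<Longrightarrow> retraction (i n) = n"
  unfolding retraction_def
  using p_i module_section_zero E_neg_zero E_add_zero[OF i_in] incl_inv_i by simp

end

end

context quiver_rep
begin

lemma Ext1_vanishes_if_coboundary_surj:
  assumes "coboundary_surj Q0 Q1 s t scale V X"
  shows "Ext1_vanishes KQ_ring GX (regular_module Q0 Q1 s t)"
  unfolding Ext1_vanishes_def
proof (intro allI impI)
  fix E :: "(('v \<times> 'a list \<Rightarrow> 'k) \<times> ('v \<Rightarrow> 'x), 'v \<times> 'a list \<Rightarrow> 'k) rmod" and i p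
  assume "rmodule KQ_ring E \<and> mod_hom KQ_ring (regular_module Q0 Q1 s t) E i \<and> mod_hom KQ_ring E GX p \<and>
    inj_on i (mcarrier (regular_module Q0 Q1 s t)) \<and> p ` mcarrier E = mcarrier GX \<and>
    {x \<in> mcarrier E. p x = mzero GX} = i ` mcarrier (regular_module Q0 Q1 s t)"
  then interpret quiver_extension Q0 Q1 s t scale V X E i p
    by unfold_locales (simp_all add: regular_module_simps)
  obtain f where f: "vertex_cochain Q0 Q1 s t scale V f"
    "\<And>a x. a \<in> Q1 \<Longrightarrow> x \<in> V (s a) \<Longrightarrow> defect_cochain a x = coboundary s t X f a x"
    using assms arrow_cochain_defect unfolding coboundary_surj_def by blast
  show "\<exists>q. mod_hom KQ_ring E (regular_module Q0 Q1 s t) q \<and>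
    (\<forall>x\<in>mcarrier (regular_module Q0 Q1 s t). q (i x) = x)"
    using retraction_hom[OF f] retraction_i[OF f] by (auto simp: regular_module_simps)
qed

end

section \<open>Closed subquivers\<close>

lemma closed_subquiverD:
  assumes q: "quiver Q0 Q1 s t" and c: "closed_subquiver Q0 Q1 s t P0 P1"
  shows "P0 \<subseteq> Q0" "P1 = {a \<in> Q1. s a \<in> P0}" "\<And>a. a \<in> Q1 \<Longrightarrow> s a \<in> P0 \<Longrightarrow> t a \<in> P0"
proof -
  obtain S where S: "P0 = closure_verts Q0 Q1 s t S" "P1 = closure_arrows Q0 Q1 s t S"
    using c unfolding closed_subquiver_def by blast
  show "P0 \<subseteq> Q0" unfolding S(1) closure_verts_def using path_tgt_in_verts[OF q] by blast
  show "P1 = {a \<in> Q1. s a \<in> P0}" unfolding S closure_arrows_def by simp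
  fix a assume a: "a \<in> Q1" "s a \<in> P0"
  then obtain v as where v: "v \<in> S" "is_path Q0 Q1 s t (v, as)" "path_tgt t (v, as) = s a"
    unfolding S(1) closure_verts_def by blast
  have "is_path Q0 Q1 s t (v, as @ [a])"
    using is_path_append[OF q v(2) is_path_arrow[OF q a(1)]] v(3) by simp
  moreover have "path_tgt t (v, as @ [a]) = t a" by (simp add: path_tgt_def)
  ultimately show "t a \<in> P0" unfolding S(1) closure_verts_def using v(1) by blast
qed

lemma quiver_closed_subquiver:
  assumes "quiver Q0 Q1 s t" "closed_subquiver Q0 Q1 s t P0 P1"
  shows "quiver P0 P1 s t"
  using closed_subquiverD[OF assms] unfolding quiver_def by simp

lemma representation_closed_subquiver:
  assumes "quiver Q0 Q1 s t" "closed_subquiver Q0 Q1 s t P0 P1" "representation Q0 Q1 s t scale V X"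
  shows "representation P0 P1 s t scale V X"
  using closed_subquiverD[OF assms(1,2)] assms(3) unfolding representation_def by auto

lemma is_path_closed_subquiver:
  assumes q: "quiver Q0 Q1 s t" and c: "closed_subquiver Q0 Q1 s t P0 P1"
    and p: "is_path Q0 Q1 s t p" "fst p \<in> P0"
  shows "is_path P0 P1 s t p"
proof -
  have "is_path P0 P1 s t (v, as)" if "is_path Q0 Q1 s t (v, as)" "v \<in> P0" for v as
    using that
  proof (induction as arbitrary: v)
    case (Cons a as)
    then have a: "a \<in> Q1" "s a = v" "is_path Q0 Q1 s t (t a, as)" by (auto simp: is_path_Cons[OF q])
    with Cons.prems(2) have "a \<in> P1" "t a \<in> P0" using closed_subquiverD[OF q c] by auto
    with a Cons.IH show ?case by (simp add: is_path_Cons[OF quiver_closed_subquiver[OF q c]])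
  qed (simp add: is_path_Nil)
  with p show ?thesis by (metis prod.collapse)
qed

definition restrict_src :: "'v set \<Rightarrow> ('v \<times> 'a list \<Rightarrow> 'k::zero) \<Rightarrow> 'v \<times> 'a list \<Rightarrow> 'k" where
  "restrict_src P0 h = (\<lambda>q. if fst q \<in> P0 then h q else 0)"

lemma restrict_src_diff:
  "restrict_src P0 (\<lambda>q. h q - k q :: 'k::group_add) = (\<lambda>q. restrict_src P0 h q - restrict_src P0 k q)"
  by (simp add: restrict_src_def fun_eq_iff)

lemma restrict_src_path_alg_mult:
  assumes "finite {q. h q \<noteq> 0}" "finite {q. k q \<noteq> 0}"
  shows "restrict_src P0 (path_alg_mult t h k) = path_alg_mult t (restrict_src P0 h) k"
proof
  fix q
  have supp: "{q. restrict_src P0 h q \<noteq> 0} \<subseteq> {q. h q \<noteq> 0}" by (auto simp: restrict_src_def)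
  show "restrict_src P0 (path_alg_mult t h k) q = path_alg_mult t (restrict_src P0 h) k q"
    unfolding path_alg_mult_eq_sum_superset[OF assms supp order_refl]
    by (subst restrict_src_def, subst path_alg_mult_eq_sum_superset[OF assms order_refl order_refl])
      (auto simp: restrict_src_def path_concat_eq_Some intro!: sum.cong sum.neutral)
qed

lemma restrict_src_in_carrier:
  assumes q: "quiver Q0 Q1 s t" and c: "closed_subquiver Q0 Q1 s t P0 P1"
    and h: "h \<in> path_alg_carrier Q0 Q1 s t"
  shows "restrict_src P0 h \<in> path_alg_carrier P0 P1 s t"
proof -
  have "{q. restrict_src P0 h q \<noteq> 0} \<subseteq> {q. h q \<noteq> 0}" by (auto simp: restrict_src_def)
  with h show ?thesis
    using is_path_closed_subquiver[OF q c]
    by (auto simp: path_alg_carrier_def restrict_src_def intro: finite_subset split: if_splits)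
qed

lemma restrict_src_carrier_id: "h \<in> path_alg_carrier P0 P1 s t \<Longrightarrow> restrict_src P0 h = h"
  using is_path_fst[of P0 P1 s t] by (auto simp: path_alg_carrier_def restrict_src_def fun_eq_iff)

lemma arrow_cochain_extend_by_zero:
  assumes q: "quiver Q0 Q1 s t" and c: "closed_subquiver Q0 Q1 s t P0 P1"
    and g: "arrow_cochain P0 P1 s t scale V g"
  shows "arrow_cochain Q0 Q1 s t scale V (\<lambda>a x. if a \<in> P1 then g a x else (\<lambda>_. 0))"
proof -
  have "is_path Q0 Q1 s t p" if "is_path P0 P1 s t p" for p
    using that is_path_mono[of P0 Q0 P1 Q1] closed_subquiverD[OF q c] by auto
  with g show ?thesis by (auto simp: arrow_cochain_def path_alg_carrier_def)
qed

lemma vertex_cochain_restrict_src: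
  assumes q: "quiver Q0 Q1 s t" and c: "closed_subquiver Q0 Q1 s t P0 P1"
    and f: "vertex_cochain Q0 Q1 s t scale V f"
  shows "vertex_cochain P0 P1 s t scale V (\<lambda>v x. restrict_src P0 (f v x))"
  unfolding vertex_cochain_def
proof (intro ballI conjI allI impI)
  fix v x assume "v \<in> P0" "x \<in> V v"
  then have fv: "f v x \<in> path_alg_carrier Q0 Q1 s t" "\<forall>q. f v x q \<noteq> 0 \<longrightarrow> path_tgt t q = v"
    "\<forall>y\<in>V v. f v (x + y) = (\<lambda>q. f v x q + f v y q)" "\<forall>c. f v (scale c x) = (\<lambda>q. c * f v x q)"
    using f closed_subquiverD(1)[OF q c] unfolding vertex_cochain_def by blast+
  show "restrict_src P0 (f v x) \<in> path_alg_carrier P0 P1 s t"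
    by (rule restrict_src_in_carrier[OF q c fv(1)])
  show "path_tgt t q = v" if "restrict_src P0 (f v x) q \<noteq> 0" for q
    using that fv(2) by (auto simp: restrict_src_def split: if_splits)
  show "restrict_src P0 (f v (x + y)) = (\<lambda>q. restrict_src P0 (f v x) q + restrict_src P0 (f v y) q)"
    if "y \<in> V v" for y
    using that fv(3) by (simp add: restrict_src_def fun_eq_iff)
  show "restrict_src P0 (f v (scale c x)) = (\<lambda>q. c * restrict_src P0 (f v x) q)" for c
    using fv(4) by (simp add: restrict_src_def fun_eq_iff)
qed

lemma restrict_src_coboundary:
  assumes "f (s a) x \<in> path_alg_carrier Q0 Q1 s t"
  shows "restrict_src P0 (coboundary s t X f a x) = coboundary s t X (\<lambda>v x. restrict_src P0 (f v x)) a x"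
  unfolding coboundary_def restrict_src_diff
  using restrict_src_path_alg_mult[of "f (s a) x" "path_monom 1 (s a, [a])" P0 t] assms
  by (simp add: path_alg_carrier_def supp_path_monom)

lemma coboundary_surj_closed_subquiver:
  fixes Q0 P0 :: "'v set" and Q1 P1 :: "'a set" and s t :: "'a \<Rightarrow> 'v"
    and scale :: "'k::field \<Rightarrow> 'x::ab_group_add \<Rightarrow> 'x" and V :: "'v \<Rightarrow> 'x set" and X :: "'a \<Rightarrow> 'x \<Rightarrow> 'x"
  assumes q: "quiver Q0 Q1 s t" and c: "closed_subquiver Q0 Q1 s t P0 P1"
    and surj: "coboundary_surj Q0 Q1 s t scale V X"
  shows "coboundary_surj P0 P1 s t scale V X"
  unfolding coboundary_surj_def
proof (intro allI impI)
  fix g :: "'a \<Rightarrow> 'x \<Rightarrow> 'v \<times> 'a list \<Rightarrow> 'k"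
  assume g: "arrow_cochain P0 P1 s t scale V g"
  obtain f where f: "vertex_cochain Q0 Q1 s t scale V f"
    and bound: "\<And>a x. a \<in> Q1 \<Longrightarrow> x \<in> V (s a) \<Longrightarrow> (if a \<in> P1 then g a x else (\<lambda>_. 0)) = coboundary s t X f a x"
    using surj arrow_cochain_extend_by_zero[OF q c g] unfolding coboundary_surj_def by blast
  have "g a x = coboundary s t X (\<lambda>v x. restrict_src P0 (f v x)) a x" if a: "a \<in> P1" and x: "x \<in> V (s a)" for a x
  proof -
    have a': "a \<in> Q1" "s a \<in> P0" using a closed_subquiverD(2)[OF q c] by auto
    have "g a x \<in> path_alg_carrier P0 P1 s t" using g a x by (simp add: arrow_cochain_def)
    then have "g a x = restrict_src P0 (g a x)" by (simp add: restrict_src_carrier_id)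
    also have "\<dots> = restrict_src P0 (coboundary s t X f a x)" using bound[OF a'(1) x] a by simp
    also have "\<dots> = coboundary s t X (\<lambda>v x. restrict_src P0 (f v x)) a x"
      using f a' x closed_subquiverD(1)[OF q c] by (intro restrict_src_coboundary) (auto simp: vertex_cochain_def)
    finally show ?thesis .
  qed
  then show "\<exists>f. vertex_cochain P0 P1 s t scale V f \<and> (\<forall>a\<in>P1. \<forall>x\<in>V (s a). g a x = coboundary s t X f a x)"
    using vertex_cochain_restrict_src[OF q c f] by blast
qed

theorem proposition1p8:
  fixes Q0 :: "'v set" and Q1 :: "'a set" and s t :: "'a \<Rightarrow> 'v"
    and scale :: "'k::field \<Rightarrow> 'x::ab_group_add \<Rightarrow> 'x"
    and V :: "'v \<Rightarrow> 'x set" and X :: "'a \<Rightarrow> 'x \<Rightarrow> 'x"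
    and P0 :: "'v set" and P1 :: "'a set"
  assumes "alg_closed_field TYPE('k)"
    and "quiver Q0 Q1 s t"
    and "representation Q0 Q1 s t scale V X"
    and "Ext1_vanishes (path_ring Q0 Q1 s t) (G_module Q0 Q1 s t scale V X) (regular_module Q0 Q1 s t)"
    and "closed_subquiver Q0 Q1 s t P0 P1"
  shows "Ext1_vanishes (path_ring P0 P1 s t) (G_module P0 P1 s t scale V X) (regular_module P0 P1 s t)"
proof -
  interpret Q: quiver_rep Q0 Q1 s t scale V X
    using assms(2,3) by unfold_locales
  interpret P: quiver_rep P0 P1 s t scale V X
    using quiver_closed_subquiver[OF assms(2,5)] representation_closed_subquiver[OF assms(2,5,3)]
    by unfold_locales
  have "coboundary_surj Q0 Q1 s t scale V X"
    using Q.coboundary_surj_if_Ext1_vanishes[OF assms(4)] .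
  then have "coboundary_surj P0 P1 s t scale V X"
    by (rule coboundary_surj_closed_subquiver[OF assms(2,5)])
  then show ?thesis
    by (rule P.Ext1_vanishes_if_coboundary_surj)
qed

end
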